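(* Let $\mathcal{R}$ be a von Neumann algebra and $A\in\mathcal{R}_{sa}$. Then the observable function $f_A:\mathcal{Q}(\mathcal{R})\to\mathbb{R}$ is continuous.
   Context: $\mathcal{R}_{sa}$ is the set of self-adjoint elements of $\mathcal{R}$; $\mathcal{P}(\mathcal{R})$ the lattice of projections of $\mathcal{R}$. A quasipoint of $\mathcal{P}(\mathcal{R})$ is a maximal subset $\mathfrak{B}\subseteq\mathcal{P}(\mathcal{R})$ such that $0\notin\mathfrak{B}$ and for all $P,Q\in\mathfrak{B}$ there is $R\in\mathfrak{B}$ with $R\le P\wedge Q$. $\mathcal{Q}(\mathcal{R})$ is the set of quasipoints (Stone spectrum), with the topology generated by the basis $\mathcal{Q}_P(\mathcal{R})=\{\mathfrak{B}: P\in\mathfrak{B}\}$, $P\in\mathcal{P}(\mathcal{R})$. If $(E^A_\lambda)_{\lambda\in\mathbb{R}}$ is the (right-continuous) spectral family of $A$, the observable function of $A$ is $f_A(\mathfrak{B}):=\inf\{\lambda\in\mathbb{R} : E^A_\lambda\in\mathfrak{B}\}$. *)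

theory Defs
  imports "HOL-Analysis.Analysis"
begin

text \<open>The
  inner product is linear in the second and conjugate-linear in the first argument.\<close>

class complex_inner = real_normed_vector +
  fixes scaleC :: "complex \<Rightarrow> 'a \<Rightarrow> 'a"
    and cinner :: "'a \<Rightarrow> 'a \<Rightarrow> complex"
  assumes scaleC_add_right: "scaleC a (x + y) = scaleC a x + scaleC a y"
    and scaleC_add_left: "scaleC (a + b) x = scaleC a x + scaleC b x"
    and scaleC_scaleC: "scaleC a (scaleC b x) = scaleC (a * b) x"
    and scaleC_one: "scaleC 1 x = x"
    and scaleC_of_real: "scaleC (complex_of_real r) x = scaleR r x"
    and cinner_commute: "cinner x y = cnj (cinner y x)"
    and cinner_add_left: "cinner (x + y) z = cinner x z + cinner y z"
    and cinner_scaleC_left: "cinner (scaleC c x) y = cnj c * cinner x y"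
    and cinner_self_nonneg: "Im (cinner x x) = 0 \<and> 0 \<le> Re (cinner x x)"
    and cinner_self_eq_zero: "cinner x x = 0 \<longleftrightarrow> x = 0"
    and norm_eq_sqrt_cinner: "norm x = sqrt (Re (cinner x x))"

class chilbert = complex_inner + complete_space

definition bounded_clinear :: "('a::complex_inner \<Rightarrow> 'b::complex_inner) \<Rightarrow> bool" where
  "bounded_clinear f \<longleftrightarrow>
     (\<forall>x y. f (x + y) = f x + f y) \<and>
     (\<forall>c x. f (scaleC c x) = scaleC c (f x)) \<and>
     (\<exists>K. \<forall>x. norm (f x) \<le> norm x * K)"

definition adj :: "('a::complex_inner \<Rightarrow> 'a) \<Rightarrow> ('a \<Rightarrow> 'a)" where
  "adj T = (THE S. \<forall>x y. cinner (T x) y = cinner x (S y))"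

definition commutant :: "('a::complex_inner \<Rightarrow> 'a) set \<Rightarrow> ('a \<Rightarrow> 'a) set" where
  "commutant S = {T. bounded_clinear T \<and> (\<forall>X\<in>S. T \<circ> X = X \<circ> T)}"

definition von_neumann_algebra :: "('a::chilbert \<Rightarrow> 'a) set \<Rightarrow> bool" where
  "von_neumann_algebra R \<longleftrightarrow>
     (\<forall>T\<in>R. bounded_clinear T) \<and> id \<in> R \<and>
     (\<forall>S\<in>R. \<forall>T\<in>R. (\<lambda>x. S x + T x) \<in> R) \<and>
     (\<forall>c. \<forall>T\<in>R. (\<lambda>x. scaleC c (T x)) \<in> R) \<and>
     (\<forall>S\<in>R. \<forall>T\<in>R. S \<circ> T \<in> R) \<and>
     (\<forall>T\<in>R. adj T \<in> R) \<and>
     commutant (commutant R) = R"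

definition self_adjoint_part :: "('a::chilbert \<Rightarrow> 'a) set \<Rightarrow> ('a \<Rightarrow> 'a) set" where
  "self_adjoint_part R = {A \<in> R. adj A = A}"

definition projections :: "('a::chilbert \<Rightarrow> 'a) set \<Rightarrow> ('a \<Rightarrow> 'a) set" where
  "projections R = {P \<in> R. P \<circ> P = P \<and> adj P = P}"

definition proj_le :: "('a::chilbert \<Rightarrow> 'a) \<Rightarrow> ('a \<Rightarrow> 'a) \<Rightarrow> bool" where
  "proj_le P Q \<longleftrightarrow> range P \<subseteq> range Q"

text \<open>The meet \<open>P \<and> Q\<close> in the projection lattice is the projection onto
  \<open>range P \<inter> range Q\<close>; hence \<open>R \<le> P \<and> Q\<close> iff \<open>range R \<subseteq> range P \<inter> range Q\<close>.\<close>

definition proj_filter_base :: "('a::chilbert \<Rightarrow> 'a) set \<Rightarrow> ('a \<Rightarrow> 'a) set \<Rightarrow> bool" where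
  "proj_filter_base R B \<longleftrightarrow>
     B \<subseteq> projections R \<and> (\<lambda>x. 0) \<notin> B \<and>
     (\<forall>P\<in>B. \<forall>Q\<in>B. \<exists>S\<in>B. range S \<subseteq> range P \<inter> range Q)"

definition quasipoint :: "('a::chilbert \<Rightarrow> 'a) set \<Rightarrow> ('a \<Rightarrow> 'a) set \<Rightarrow> bool" where
  "quasipoint R B \<longleftrightarrow>
     proj_filter_base R B \<and> (\<forall>C. proj_filter_base R C \<and> B \<subseteq> C \<longrightarrow> C = B)"

definition stone_spectrum :: "('a::chilbert \<Rightarrow> 'a) set \<Rightarrow> ('a \<Rightarrow> 'a) set set" where
  "stone_spectrum R = {B. quasipoint R B}"

definition stone_topology :: "('a::chilbert \<Rightarrow> 'a) set \<Rightarrow> ('a \<Rightarrow> 'a) set topology" where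
  "stone_topology R =
     topology_generated_by {{B \<in> stone_spectrum R. P \<in> B} | P. P \<in> projections R}"

text \<open>A (right-continuous, bounded) spectral family \<open>E\<close> of the bounded operator \<open>A\<close>:
  orthogonal projections, increasing, strongly right-continuous, equal to 0 below some
  \<open>a\<close> and to the identity from some \<open>b\<close> on, with \<open>A = \<integral> \<lambda> dE\<^sub>\<lambda>\<close> as the
  operator-norm limit of Riemann--Stieltjes sums.\<close>

definition is_spectral_family :: "('a::chilbert \<Rightarrow> 'a) \<Rightarrow> (real \<Rightarrow> 'a \<Rightarrow> 'a) \<Rightarrow> bool" where
  "is_spectral_family A E \<longleftrightarrow>
     (\<forall>s. bounded_clinear (E s) \<and> E s \<circ> E s = E s \<and> adj (E s) = E s) \<and>
     (\<forall>s u. s \<le> u \<longrightarrow> proj_le (E s) (E u)) \<and>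
     (\<forall>s x. ((\<lambda>u. E u x) \<longlongrightarrow> E s x) (at_right s)) \<and>
     (\<exists>a b. a < b \<and> (\<forall>s<a. E s = (\<lambda>x. 0)) \<and> (\<forall>s\<ge>b. E s = id) \<and>
       (\<forall>\<epsilon>>0. \<exists>\<delta>>0. \<forall>(n::nat) (l::nat \<Rightarrow> real) (t::nat \<Rightarrow> real).
          l 0 < a \<and> b \<le> l n \<and>
          (\<forall>k\<in>{1..n}. l (k - 1) < l k \<and> l k - l (k - 1) < \<delta> \<and>
                        l (k - 1) \<le> t k \<and> t k \<le> l k) \<longrightarrow>
          (\<forall>x. norm (A x - (\<Sum>k\<in>{1..n}. scaleR (t k) (E (l k) x - E (l (k - 1)) x)))
                 \<le> \<epsilon> * norm x)))"

definition spectral_family :: "('a::chilbert \<Rightarrow> 'a) \<Rightarrow> real \<Rightarrow> 'a \<Rightarrow> 'a" where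
  "spectral_family A = (THE E. is_spectral_family A E)"

definition observable_function ::
    "('a::chilbert \<Rightarrow> 'a) \<Rightarrow> ('a \<Rightarrow> 'a) set \<Rightarrow> real" where
  "observable_function A B = Inf {s. spectral_family A s \<in> B}"

end

theory Submission
  imports Defs
begin

text \<open>
  The spectral projections of a self-adjoint \<open>A\<close> are constructed directly: \<open>E s\<close> projects onto
  the kernel of \<open>|A - s| + (A - s)\<close>, where \<open>|T|\<close> is the positive square root of \<open>T\<^sup>2\<close>, obtained
  by the monotone iteration \<open>C (n + 1) = C n + (B - (C n)\<^sup>2) / 2\<close>. These projections increase
  with \<open>s\<close>, are right-continuous and approximate \<open>A\<close> by Riemann sums, so they form a spectral
  family; every spectral family of \<open>A\<close> satisfies the same two-sided estimates of the form
  \<open>\<langle>A y, y\<rangle>\<close> and therefore coincides with it. Each \<open>E s\<close> commutes with the commutant of \<open>R\<close>,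
  hence lies in \<open>R\<close>.

  Continuity of \<open>f\<^sub>A B = Inf {s. E s \<in> B}\<close> is then a statement about quasipoints:
  \<open>f\<^sub>A B < r\<close> iff \<open>E s \<in> B\<close> for some \<open>s < r\<close>, and, by maximality of quasipoints,
  \<open>f\<^sub>A B > r\<close> iff \<open>Q \<and> E \<mu> = 0\<close> for some \<open>Q \<in> B\<close> and \<open>\<mu> > r\<close>. Both preimages are therefore
  unions of basic open sets \<open>{B. P \<in> B}\<close>.
\<close>

declare scaleC_one [simp]

lemma cinner_add_right: "cinner x (y + z) = cinner x y + cinner x z"
  by (metis cinner_commute cinner_add_left complex_cnj_add)

lemma cinner_scaleC_right: "cinner x (scaleC c y) = c * cinner x y"
  by (metis cinner_commute cinner_scaleC_left complex_cnj_cnj complex_cnj_mult)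

lemma cinner_zero_left [simp]: "cinner 0 y = 0"
  using cinner_add_left[of 0 0 y] by simp

lemma cinner_zero_right [simp]: "cinner x 0 = 0"
  using cinner_add_right[of x 0 0] by simp

lemma cinner_minus_left: "cinner (- x) y = - cinner x y"
  using cinner_add_left[of x "-x" y] by (simp add: add_eq_0_iff2)

lemma cinner_minus_right: "cinner x (- y) = - cinner x y"
  using cinner_add_right[of x y "-y"] by (simp add: add_eq_0_iff2)

lemma cinner_diff_left: "cinner (x - y) z = cinner x z - cinner y z"
  using cinner_add_left[of x "-y" z] by (simp add: cinner_minus_left)

lemma cinner_diff_right: "cinner x (y - z) = cinner x y - cinner x z"
  using cinner_add_right[of x y "-z"] by (simp add: cinner_minus_right)

lemma cinner_sum_left: "cinner (\<Sum>i\<in>I. f i) y = (\<Sum>i\<in>I. cinner (f i) y)"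
  by (induction I rule: infinite_finite_induct) (auto simp: cinner_add_left)

lemma cinner_sum_right: "cinner y (\<Sum>i\<in>I. f i) = (\<Sum>i\<in>I. cinner y (f i))"
  by (induction I rule: infinite_finite_induct) (auto simp: cinner_add_right)

lemma cinner_scaleR_left: "cinner (scaleR r x) y = complex_of_real r * cinner x y"
  by (simp add: scaleC_of_real[symmetric] cinner_scaleC_left)

lemma cinner_scaleR_right: "cinner x (scaleR r y) = complex_of_real r * cinner x y"
  by (simp add: scaleC_of_real[symmetric] cinner_scaleC_right)

lemma scaleC_zero_left [simp]: "scaleC 0 x = 0"
  using scaleC_of_real[of 0 x] by simp

lemma scaleC_zero_right [simp]: "scaleC c 0 = 0"
  using scaleC_add_right[of c 0 0] by simp

lemma scaleC_minus_right: "scaleC c (- x) = - scaleC c x"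
  using scaleC_add_right[of c x "-x"] by (simp add: add_eq_0_iff2)

lemma scaleC_diff_right: "scaleC c (x - y) = scaleC c x - scaleC c y"
  using scaleC_add_right[of c x "-y"] by (simp add: scaleC_minus_right)

lemma scaleC_minus_left: "scaleC (- c) x = - scaleC c x"
  using scaleC_add_left[of c "-c" x] by (simp add: add_eq_0_iff2)

lemma power2_norm_eq_cinner: "(norm x)\<^sup>2 = Re (cinner x x)"
  using cinner_self_nonneg[of x] by (simp add: norm_eq_sqrt_cinner)

lemma cinner_self_eq_norm: "cinner x x = complex_of_real ((norm x)\<^sup>2)"
  using cinner_self_nonneg[of x] by (simp add: power2_norm_eq_cinner complex_eq_iff)

lemma Re_cinner_commute: "Re (cinner y x) = Re (cinner x y)"
  by (subst cinner_commute) simp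

lemma norm_scaleC: "norm (scaleC c x) = cmod c * norm x"
proof -
  have "cinner (scaleC c x) (scaleC c x) = (c * cnj c) * cinner x x"
    by (simp add: cinner_scaleC_left cinner_scaleC_right)
  also have "\<dots> = complex_of_real ((cmod c * norm x)\<^sup>2)"
    by (simp only: cinner_self_eq_norm complex_norm_square[symmetric] of_real_mult power_mult_distrib)
  finally have "(norm (scaleC c x))\<^sup>2 = (cmod c * norm x)\<^sup>2"
    by (simp only: cinner_self_eq_norm of_real_eq_iff)
  then show ?thesis
    by simp
qed

lemma norm_add_square: "(norm (x + y))\<^sup>2 = (norm x)\<^sup>2 + (norm y)\<^sup>2 + 2 * Re (cinner x y)"
  by (simp add: power2_norm_eq_cinner cinner_add_left cinner_add_right Re_cinner_commute[of x y])

lemma norm_diff_square: "(norm (x - y))\<^sup>2 = (norm x)\<^sup>2 + (norm y)\<^sup>2 - 2 * Re (cinner x y)"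
  by (simp add: power2_norm_eq_cinner cinner_diff_left cinner_diff_right Re_cinner_commute[of x y])

lemma cinner_ext_left: "(\<And>y. cinner x y = cinner x' y) \<Longrightarrow> x = x'"
  using cinner_self_eq_zero[of "x - x'"] by (simp add: cinner_diff_left)

lemma cinner_ext_right: "(\<And>y. cinner y x = cinner y x') \<Longrightarrow> x = x'"
  by (rule cinner_ext_left) (metis cinner_commute)

lemma pythagoras_sum:
  assumes "finite I" and "\<And>j k. j \<in> I \<Longrightarrow> k \<in> I \<Longrightarrow> j \<noteq> k \<Longrightarrow> cinner (v j) (v k) = 0"
  shows "(norm (\<Sum>k\<in>I. v k))\<^sup>2 = (\<Sum>k\<in>I. (norm (v k))\<^sup>2)"
  using assms
proof (induction I rule: finite_induct)
  case (insert a F)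
  have "cinner (v a) (\<Sum>k\<in>F. v k) = 0"
    using insert.prems insert.hyps by (auto simp: cinner_sum_right intro: sum.neutral)
  then show ?case
    using insert by (simp add: norm_add_square)
qed simp

lemma quadratic_nonneg_imp_discriminant:
  fixes a b c :: real
  assumes "0 \<le> a" "0 \<le> b" "0 \<le> c" and q: "\<And>t. 0 \<le> a - 2 * t * b + t\<^sup>2 * b * c"
  shows "b \<le> a * c"
proof (cases "c > 0")
  case True
  have "0 \<le> a - 2 * (1/c) * b + (1/c)\<^sup>2 * b * c" by (rule q)
  also have "\<dots> = a - b / c" using True by (simp add: power2_eq_square field_simps)
  finally show ?thesis using True by (simp add: field_simps)
next
  case False
  then have "c = 0" using assms by simp
  then show ?thesis
    using q[of "(a + 1) / (2 * b)"] \<open>0 \<le> b\<close> by (cases "b = 0") auto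
qed

lemma hermitian_form_Cauchy_Schwarz:
  fixes f :: "'a::complex_inner \<Rightarrow> 'a \<Rightarrow> complex"
  assumes add: "\<And>x y z. f x (y + z) = f x y + f x z"
    and scale: "\<And>x y c. f x (scaleC c y) = c * f x y"
    and herm: "\<And>x y. f y x = cnj (f x y)"
    and pos: "\<And>x. 0 \<le> Re (f x x)"
  shows "(cmod (f x y))\<^sup>2 \<le> Re (f x x) * Re (f y y)"
proof -
  have add_left: "f (u + v) z = f u z + f v z" for u v z
    by (metis add herm complex_cnj_add)
  have scale_left: "f (scaleC s u) z = cnj s * f u z" for s u z
    by (metis scale herm complex_cnj_mult)
  define w where "w = f x y"
  have "0 \<le> Re (f x x) - 2 * t * (cmod w)\<^sup>2 + t\<^sup>2 * (cmod w)\<^sup>2 * Re (f y y)" for t :: real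
  proof -
    define s where "s = - (complex_of_real t * cnj w)"
    have ww: "w * cnj w = complex_of_real ((cmod w)\<^sup>2)"
      by (rule complex_norm_square[symmetric])
    have "f (x + scaleC s y) (x + scaleC s y) = f x x + s * w + cnj s * cnj w + cnj s * s * f y y"
      by (simp add: add add_left scale scale_left herm[of x y] w_def algebra_simps)
    moreover have "s * w = - complex_of_real (t * (cmod w)\<^sup>2)"
      "cnj s * cnj w = - complex_of_real (t * (cmod w)\<^sup>2)"
      "cnj s * s = complex_of_real (t\<^sup>2 * (cmod w)\<^sup>2)"
      unfolding s_def using ww by (simp_all add: power2_eq_square mult.commute mult.left_commute)
    ultimately show ?thesis
      using pos[of "x + scaleC s y"] by (simp add: mult.assoc)
  qed
  then have "(cmod w)\<^sup>2 \<le> Re (f x x) * Re (f y y)"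
    by (intro quadratic_nonneg_imp_discriminant pos) (auto simp: mult.assoc)
  then show ?thesis by (simp add: w_def)
qed

lemma cinner_Cauchy_Schwarz: "cmod (cinner x y) \<le> norm x * norm y"
proof -
  have "(cmod (cinner x y))\<^sup>2 \<le> Re (cinner x x) * Re (cinner y y)"
    by (rule hermitian_form_Cauchy_Schwarz)
      (auto simp: cinner_add_right cinner_scaleC_right cinner_self_nonneg intro: cinner_commute)
  also have "\<dots> = (norm x * norm y)\<^sup>2" by (simp add: power2_norm_eq_cinner power_mult_distrib)
  finally show ?thesis by (simp add: power2_le_iff_abs_le)
qed

lemma bounded_bilinear_cinner: "bounded_bilinear cinner"
proof
  show "\<exists>K. \<forall>a b. norm (cinner a b) \<le> norm a * norm b * K"
    by (rule exI[of _ 1]) (simp add: cinner_Cauchy_Schwarz)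
qed (simp_all add: cinner_add_left cinner_add_right cinner_scaleR_left cinner_scaleR_right
      scaleR_conv_of_real)

lemmas tendsto_cinner = bounded_bilinear.tendsto[OF bounded_bilinear_cinner]

context
  fixes T :: "'a::complex_inner \<Rightarrow> 'b::complex_inner"
  assumes T: "bounded_clinear T"
begin

lemma clinear_add: "T (x + y) = T x + T y"
  using T unfolding bounded_clinear_def by blast

lemma clinear_scaleC: "T (scaleC c x) = scaleC c (T x)"
  using T unfolding bounded_clinear_def by blast

lemma clinear_scaleR: "T (scaleR r x) = scaleR r (T x)"
  using clinear_scaleC[of "complex_of_real r" x] by (simp add: scaleC_of_real)

lemma clinear_zero [simp]: "T 0 = 0"
  using clinear_add[of 0 0] by simp

lemma clinear_minus: "T (- x) = - T x"
  using clinear_add[of x "-x"] by (simp add: add_eq_0_iff)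

lemma clinear_diff: "T (x - y) = T x - T y"
  using clinear_add[of x "-y"] by (simp add: clinear_minus)

lemma clinear_sum: "T (\<Sum>i\<in>I. f i) = (\<Sum>i\<in>I. T (f i))"
  by (induction I rule: infinite_finite_induct) (auto simp: clinear_add)

lemma bounded_clinear_pos_bound: "\<exists>K>0. \<forall>x. norm (T x) \<le> norm x * K"
proof -
  obtain K where K: "\<forall>x. norm (T x) \<le> norm x * K"
    using T unfolding bounded_clinear_def by blast
  have "norm (T x) \<le> norm x * (\<bar>K\<bar> + 1)" for x
  proof -
    have "norm x * K \<le> norm x * (\<bar>K\<bar> + 1)" by (rule mult_left_mono) auto
    then show ?thesis using K by (meson order_trans)
  qed
  then show ?thesis by (intro exI[of _ "\<bar>K\<bar> + 1"]) auto
qed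

lemma bounded_clinear_bounded_linear: "bounded_linear T"
proof -
  obtain K where "\<forall>x. norm (T x) \<le> norm x * K"
    using bounded_clinear_pos_bound by blast
  then show ?thesis
    by (intro bounded_linear_intro[of _ K]) (auto simp: clinear_add clinear_scaleR)
qed

lemma tendsto_clinear: "(f \<longlongrightarrow> l) F \<Longrightarrow> ((\<lambda>n. T (f n)) \<longlongrightarrow> T l) F"
  by (rule bounded_linear.tendsto[OF bounded_clinear_bounded_linear])

lemma continuous_on_clinear: "continuous_on S T"
  by (rule linear_continuous_on[OF bounded_clinear_bounded_linear])

end

lemma bounded_clinearI:
  assumes "\<And>x y. T (x + y) = T x + T y" "\<And>c x. T (scaleC c x) = scaleC c (T x)"
    "\<And>x. norm (T x) \<le> norm x * K"
  shows "bounded_clinear T"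
  using assms unfolding bounded_clinear_def by blast

lemma bounded_clinear_ident: "bounded_clinear (\<lambda>x::'a::complex_inner. x)"
  by (rule bounded_clinearI[of _ 1]) auto

lemma bounded_clinear_id: "bounded_clinear (id :: 'a::complex_inner \<Rightarrow> 'a)"
  by (simp add: id_def bounded_clinear_ident)

lemma bounded_clinear_zero: "bounded_clinear (\<lambda>x::'a::complex_inner. 0::'b::complex_inner)"
  by (rule bounded_clinearI[of _ 0]) auto

lemma bounded_clinear_compose:
  assumes S: "bounded_clinear S" and T: "bounded_clinear T"
  shows "bounded_clinear (\<lambda>x. S (T x))"
proof -
  obtain K1 where K1: "K1 > 0" "\<forall>x. norm (S x) \<le> norm x * K1"
    using bounded_clinear_pos_bound[OF S] by blast
  obtain K2 where K2: "\<forall>x. norm (T x) \<le> norm x * K2"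
    using bounded_clinear_pos_bound[OF T] by blast
  have "norm (S (T x)) \<le> norm x * (K2 * K1)" for x
  proof -
    have "norm (S (T x)) \<le> norm (T x) * K1" using K1 by blast
    also have "\<dots> \<le> (norm x * K2) * K1" using K1 K2 by (intro mult_right_mono) auto
    finally show ?thesis by (simp add: mult.assoc)
  qed
  then show ?thesis
    by (intro bounded_clinearI[of _ "K2 * K1"]) (auto simp: clinear_add[OF S] clinear_add[OF T]
        clinear_scaleC[OF S] clinear_scaleC[OF T])
qed

lemma bounded_clinear_add:
  assumes S: "bounded_clinear S" and T: "bounded_clinear T"
  shows "bounded_clinear (\<lambda>x. S x + T x)"
proof -
  obtain K1 where K1: "\<forall>x. norm (S x) \<le> norm x * K1"
    using bounded_clinear_pos_bound[OF S] by blast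
  obtain K2 where K2: "\<forall>x. norm (T x) \<le> norm x * K2"
    using bounded_clinear_pos_bound[OF T] by blast
  have "norm (S x + T x) \<le> norm x * (K1 + K2)" for x
    using norm_triangle_ineq[of "S x" "T x"] K1 K2 by (simp add: distrib_left) (smt (verit))
  then show ?thesis
    by (intro bounded_clinearI[of _ "K1 + K2"]) (auto simp: clinear_add[OF S] clinear_add[OF T]
        clinear_scaleC[OF S] clinear_scaleC[OF T] scaleC_add_right)
qed

lemma bounded_clinear_scaleC:
  assumes T: "bounded_clinear T"
  shows "bounded_clinear (\<lambda>x. scaleC c (T x))"
proof -
  obtain K where K: "\<forall>x. norm (T x) \<le> norm x * K"
    using bounded_clinear_pos_bound[OF T] by blast
  have "norm (scaleC c (T x)) \<le> norm x * (cmod c * K)" for x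
    using K by (simp add: norm_scaleC) (metis mult.left_commute mult_left_mono norm_ge_zero)
  then show ?thesis
    by (intro bounded_clinearI[of _ "cmod c * K"]) (auto simp: clinear_add[OF T]
        clinear_scaleC[OF T] scaleC_add_right scaleC_scaleC mult.commute)
qed

lemma bounded_clinear_scaleR: "bounded_clinear T \<Longrightarrow> bounded_clinear (\<lambda>x. scaleR r (T x))"
  using bounded_clinear_scaleC[of T "complex_of_real r"] by (simp only: scaleC_of_real)

lemma bounded_clinear_diff:
  assumes "bounded_clinear S" "bounded_clinear T"
  shows "bounded_clinear (\<lambda>x. S x - T x)"
  using bounded_clinear_add[OF assms(1) bounded_clinear_scaleR[OF assms(2), of "-1"]] by simp

lemma adj_eqI:
  assumes "\<And>x y. cinner (T x) y = cinner x (S y)"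
  shows "adj T = S"
  unfolding adj_def
proof (rule the_equality)
  show "\<forall>x y. cinner (T x) y = cinner x (S y)" using assms by blast
  show "S' = S" if "\<forall>x y. cinner (T x) y = cinner x (S' y)" for S'
    using that assms by (metis cinner_ext_right ext)
qed

section \<open>Orthogonal projection onto closed subspaces\<close>

definition csubspace :: "'a::complex_inner set \<Rightarrow> bool" where
  "csubspace M \<longleftrightarrow> 0 \<in> M \<and> (\<forall>x\<in>M. \<forall>y\<in>M. x + y \<in> M) \<and> (\<forall>c. \<forall>x\<in>M. scaleC c x \<in> M)"

lemma csubspace_0: "csubspace M \<Longrightarrow> 0 \<in> M"
  unfolding csubspace_def by blast

lemma csubspace_add: "csubspace M \<Longrightarrow> x \<in> M \<Longrightarrow> y \<in> M \<Longrightarrow> x + y \<in> M"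
  unfolding csubspace_def by blast

lemma csubspace_scaleC: "csubspace M \<Longrightarrow> x \<in> M \<Longrightarrow> scaleC c x \<in> M"
  unfolding csubspace_def by blast

lemma csubspace_diff: "csubspace M \<Longrightarrow> x \<in> M \<Longrightarrow> y \<in> M \<Longrightarrow> x - y \<in> M"
  using csubspace_add[of M x "scaleC (-1) y"] csubspace_scaleC[of M y "-1"]
  by (simp add: scaleC_minus_left)

lemma csubspace_convex: "csubspace M \<Longrightarrow> convex M"
  unfolding convex_def
  by (metis csubspace_add csubspace_scaleC scaleC_of_real)

lemma csubspace_UNIV: "csubspace UNIV"
  unfolding csubspace_def by simp

lemma csubspace_Int: "csubspace M \<Longrightarrow> csubspace N \<Longrightarrow> csubspace (M \<inter> N)"
  unfolding csubspace_def by blast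

lemma parallelogram_midpoint:
  fixes x a b :: "'a::complex_inner"
  shows "(norm (a - b))\<^sup>2 = 2 * (norm (x - a))\<^sup>2 + 2 * (norm (x - b))\<^sup>2
            - 4 * (norm (x - scaleR (1/2) (a + b)))\<^sup>2"
proof -
  have "(x - a) + (x - b) = scaleR 2 (x - scaleR (1/2) (a + b))"
    by (simp add: algebra_simps scaleR_2)
  then have "(norm ((x - a) + (x - b)))\<^sup>2 = 4 * (norm (x - scaleR (1/2) (a + b)))\<^sup>2"
    by (simp add: power_mult_distrib)
  moreover have "(x - a) - (x - b) = b - a" by simp
  ultimately show ?thesis
    using norm_add_square[of "x - a" "x - b"] norm_diff_square[of "x - a" "x - b"]
    by (simp add: norm_minus_commute[of a b])
qed

lemma Cauchy_if_square_dist_le_inverse: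
  fixes f :: "nat \<Rightarrow> 'a::real_normed_vector"
  assumes "0 \<le> c" and le: "\<And>m n. (norm (f m - f n))\<^sup>2 \<le> c * (inverse (real (Suc m)) + inverse (real (Suc n)))"
  shows "Cauchy f"
proof (rule metric_CauchyI)
  fix e :: real assume e: "e > 0"
  obtain N :: nat where N: "2 * c / e\<^sup>2 < real N" using reals_Archimedean2 by blast
  have "dist (f m) (f n) < e" if "m \<ge> N" "n \<ge> N" for m n
  proof -
    have "inverse (real (Suc k)) \<le> inverse (real (Suc N))" if "k \<ge> N" for k
      using that by (intro le_imp_inverse_le) auto
    then have "inverse (real (Suc m)) + inverse (real (Suc n)) \<le> 2 * inverse (real (Suc N))"
      using that by (smt (verit))
    then have "c * (inverse (real (Suc m)) + inverse (real (Suc n))) \<le> c * (2 * inverse (real (Suc N)))"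
      by (rule mult_left_mono) fact
    then have "(norm (f m - f n))\<^sup>2 \<le> c * (2 * inverse (real (Suc N)))"
      using le[of m n] by linarith
    also have "\<dots> = 2 * c / real (Suc N)" by (simp add: field_simps)
    also have "\<dots> < e\<^sup>2"
    proof -
      have "2 * c < e\<^sup>2 * real N" using N e by (simp add: field_simps)
      also have "\<dots> \<le> e\<^sup>2 * real (Suc N)" by (intro mult_left_mono) auto
      finally show ?thesis by (simp add: field_simps)
    qed
    finally show ?thesis using e by (simp add: dist_norm power_less_imp_less_base)
  qed
  then show "\<exists>M. \<forall>m\<ge>M. \<forall>n\<ge>M. dist (f m) (f n) < e" by blast
qed

lemma nearest_point_exists:
  fixes M :: "'a::chilbert set"
  assumes cl: "closed M" and cvx: "convex M" and ne: "M \<noteq> {}"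
  shows "\<exists>m\<in>M. \<forall>y\<in>M. norm (x - m) \<le> norm (x - y)"
proof -
  define d where "d = Inf ((\<lambda>y. norm (x - y)) ` M)"
  have dle: "d \<le> norm (x - y)" if "y \<in> M" for y
    unfolding d_def by (intro cInf_lower bdd_belowI[of _ 0]) (use that in auto)
  have d0: "0 \<le> d"
    unfolding d_def using ne by (intro cInf_greatest) auto
  define eps where "eps n = inverse (real (Suc n))" for n
  have eps: "0 < eps n" "eps n \<le> 1" for n
    unfolding eps_def by (auto simp: field_simps)
  have "\<exists>y\<in>M. norm (x - y) < d + eps n" for n
    using cInf_lessD[of "(\<lambda>y. norm (x - y)) ` M" "d + eps n"] ne eps(1)[of n]
    unfolding d_def by auto
  then obtain ys where ys: "\<And>n. ys n \<in> M" "\<And>n. norm (x - ys n) < d + eps n"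
    by metis
  have sq: "(norm (x - ys k))\<^sup>2 \<le> d\<^sup>2 + (2 * d + 1) * eps k" for k
  proof -
    have "(norm (x - ys k))\<^sup>2 \<le> (d + eps k)\<^sup>2"
      using ys(2)[of k] by (intro power_mono) auto
    also have "\<dots> \<le> d\<^sup>2 + (2 * d + 1) * eps k"
      using eps[of k] d0 by (simp add: power2_eq_square algebra_simps)
    finally show ?thesis .
  qed
  have bnd: "(norm (ys n - ys m))\<^sup>2 \<le> (4 * d + 2) * (eps n + eps m)" for n m
  proof -
    have "scaleR (1/2) (ys n + ys m) \<in> M"
      using convexD[OF cvx ys(1) ys(1), of "1/2" "1/2" n m] by (simp add: scaleR_add_right)
    then have "d\<^sup>2 \<le> (norm (x - scaleR (1/2) (ys n + ys m)))\<^sup>2"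
      using dle d0 by (intro power_mono) auto
    then show ?thesis
      using sq[of n] sq[of m] unfolding parallelogram_midpoint[of "ys n" "ys m" x]
      by (simp add: algebra_simps)
  qed
  have "Cauchy ys"
    using bnd d0 unfolding eps_def by (intro Cauchy_if_square_dist_le_inverse[of "4 * d + 2"]) auto
  then obtain m where lim: "ys \<longlonglongrightarrow> m" using Cauchy_convergent_iff convergent_def by blast
  have "m \<in> M" using closed_sequentially[OF cl _ lim] ys(1) by blast
  moreover have "norm (x - m) \<le> d"
  proof (rule LIMSEQ_le)
    show "(\<lambda>n. norm (x - ys n)) \<longlonglongrightarrow> norm (x - m)" by (intro tendsto_intros lim)
    show "(\<lambda>n. d + eps n) \<longlonglongrightarrow> d"
      using tendsto_add[OF tendsto_const LIMSEQ_inverse_real_of_nat, of d] by (simp add: eps_def)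
    show "\<exists>N. \<forall>n\<ge>N. norm (x - ys n) \<le> d + eps n"
      using ys(2) less_imp_le by blast
  qed
  ultimately show ?thesis using dle by force
qed

lemma nearest_point_orthogonal:
  assumes sub: "csubspace M" and m: "m \<in> M" and near: "\<And>y. y \<in> M \<Longrightarrow> norm (x - m) \<le> norm (x - y)"
    and y: "y \<in> M"
  shows "cinner y (x - m) = 0"
proof -
  \<comment> \<open>otherwise moving from \<open>m\<close> by a small multiple of \<open>c y\<close> brings us closer to \<open>x\<close>\<close>
  define z where "z = x - m"
  define c where "c = cinner y z"
  define ep where "ep = inverse ((norm y)\<^sup>2 + 1)"
  have ep: "0 < ep" "ep * (norm y)\<^sup>2 < 1"
    unfolding ep_def by (auto simp: field_simps add_pos_nonneg)
  define t where "t = complex_of_real ep * c"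
  have "m + scaleC t y \<in> M" using csubspace_add[OF sub m csubspace_scaleC[OF sub y]] .
  then have "(norm z)\<^sup>2 \<le> (norm (z - scaleC t y))\<^sup>2"
    using near unfolding z_def by (simp add: diff_diff_eq power_mono)
  also have "\<dots> = (norm z)\<^sup>2 + (ep * cmod c * norm y)\<^sup>2 - 2 * (ep * (cmod c)\<^sup>2)"
  proof -
    have "cinner z (scaleC t y) = complex_of_real ep * (c * cnj c)"
      using cinner_commute[of z y] by (simp add: cinner_scaleC_right t_def c_def)
    then have "Re (cinner z (scaleC t y)) = ep * (cmod c)\<^sup>2"
      by (simp only: complex_norm_square[symmetric] of_real_mult[symmetric] Re_complex_of_real)
    moreover have "cmod t = ep * cmod c"
      unfolding t_def using ep by (simp add: norm_mult)
    ultimately show ?thesis by (simp add: norm_diff_square norm_scaleC)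
  qed
  finally have "2 * ep * (cmod c)\<^sup>2 \<le> ep * (cmod c)\<^sup>2 * (ep * (norm y)\<^sup>2)"
    by (simp add: power_mult_distrib power2_eq_square mult_ac)
  also have "\<dots> \<le> ep * (cmod c)\<^sup>2 * 1" using ep by (intro mult_left_mono) auto
  finally have "(cmod c)\<^sup>2 \<le> 0" using ep by (simp add: field_simps)
  then show ?thesis unfolding c_def z_def by simp
qed

lemma orthogonal_decomposition_exists:
  fixes M :: "'a::chilbert set"
  assumes "closed M" "csubspace M"
  shows "\<exists>m\<in>M. \<forall>y\<in>M. cinner y (x - m) = 0"
proof -
  obtain m where "m \<in> M" "\<And>y. y \<in> M \<Longrightarrow> norm (x - m) \<le> norm (x - y)"
    using nearest_point_exists[of M x] assms csubspace_0 csubspace_convex by blast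
  then show ?thesis using nearest_point_orthogonal[OF assms(2)] by blast
qed

definition orthoproj :: "'a::chilbert set \<Rightarrow> 'a \<Rightarrow> 'a" where
  "orthoproj M x = (SOME m. m \<in> M \<and> (\<forall>y\<in>M. cinner y (x - m) = 0))"

context
  fixes M :: "'a::chilbert set"
  assumes closed: "closed M" and sub: "csubspace M"
begin

lemma orthoproj_in_orthogonal:
  "orthoproj M x \<in> M \<and> (\<forall>y\<in>M. cinner y (x - orthoproj M x) = 0)"
  unfolding orthoproj_def
  by (rule someI_ex) (use orthogonal_decomposition_exists[OF closed sub, of x] in blast)

lemma orthoproj_in: "orthoproj M x \<in> M"
  using orthoproj_in_orthogonal by blast

lemma orthoproj_orthogonal: "y \<in> M \<Longrightarrow> cinner y (x - orthoproj M x) = 0"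
  using orthoproj_in_orthogonal by blast

lemma orthoproj_unique:
  assumes "m \<in> M" "\<And>y. y \<in> M \<Longrightarrow> cinner y (x - m) = 0"
  shows "orthoproj M x = m"
proof -
  define d where "d = orthoproj M x - m"
  have "d \<in> M" unfolding d_def by (rule csubspace_diff[OF sub orthoproj_in assms(1)])
  then have "cinner d d = cinner d (x - m) - cinner d (x - orthoproj M x)"
    by (simp add: d_def cinner_diff_right[symmetric])
  also have "\<dots> = 0" using assms(2) orthoproj_orthogonal \<open>d \<in> M\<close> by simp
  finally show ?thesis using cinner_self_eq_zero[of d] by (simp add: d_def)
qed

lemma orthoproj_fixed: "m \<in> M \<Longrightarrow> orthoproj M m = m"
  by (rule orthoproj_unique) auto

lemma orthoproj_add: "orthoproj M (x + y) = orthoproj M x + orthoproj M y"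
proof (rule orthoproj_unique)
  show "orthoproj M x + orthoproj M y \<in> M" by (rule csubspace_add[OF sub orthoproj_in orthoproj_in])
  fix z assume "z \<in> M"
  have "x + y - (orthoproj M x + orthoproj M y) = (x - orthoproj M x) + (y - orthoproj M y)"
    by simp
  then show "cinner z (x + y - (orthoproj M x + orthoproj M y)) = 0"
    using orthoproj_orthogonal[OF \<open>z \<in> M\<close>] by (simp only: cinner_add_right) simp
qed

lemma orthoproj_scaleC: "orthoproj M (scaleC c x) = scaleC c (orthoproj M x)"
proof (rule orthoproj_unique)
  show "scaleC c (orthoproj M x) \<in> M" by (rule csubspace_scaleC[OF sub orthoproj_in])
  fix y assume "y \<in> M"
  then show "cinner y (scaleC c x - scaleC c (orthoproj M x)) = 0"
    using orthoproj_orthogonal by (simp add: scaleC_diff_right[symmetric] cinner_scaleC_right)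
qed

lemma orthoproj_symmetric: "cinner (orthoproj M x) y = cinner x (orthoproj M y)"
proof -
  have "cinner (orthoproj M x) (y - orthoproj M y) = 0"
    by (rule orthoproj_orthogonal[OF orthoproj_in])
  moreover have "cinner (x - orthoproj M x) (orthoproj M y) = 0"
    using orthoproj_orthogonal[OF orthoproj_in] by (metis cinner_commute complex_cnj_zero)
  ultimately show ?thesis by (simp add: cinner_diff_left cinner_diff_right)
qed

lemma orthoproj_norm_le: "norm (orthoproj M x) \<le> norm x"
proof -
  have "cinner (orthoproj M x) (x - orthoproj M x) = 0"
    by (rule orthoproj_orthogonal[OF orthoproj_in])
  then have "(norm x)\<^sup>2 = (norm (orthoproj M x))\<^sup>2 + (norm (x - orthoproj M x))\<^sup>2"
    using norm_add_square[of "orthoproj M x" "x - orthoproj M x"] by simp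
  then have "(norm (orthoproj M x))\<^sup>2 \<le> (norm x)\<^sup>2" by simp
  then show ?thesis by (simp add: power2_le_iff_abs_le)
qed

lemma bounded_clinear_orthoproj: "bounded_clinear (orthoproj M)"
  by (rule bounded_clinearI[of _ 1]) (auto simp: orthoproj_add orthoproj_scaleC orthoproj_norm_le)

lemma range_orthoproj: "range (orthoproj M) = M"
  using orthoproj_in orthoproj_fixed by (auto, metis rangeI)

end

section \<open>Riesz representation and existence of adjoints\<close>

lemma riesz_representation:
  fixes phi :: "'a::chilbert \<Rightarrow> complex"
  assumes add: "\<And>x y. phi (x + y) = phi x + phi y"
    and scale: "\<And>c x. phi (scaleC c x) = c * phi x"
    and bound: "\<And>x. norm (phi x) \<le> norm x * K"
  shows "\<exists>z. \<forall>x. phi x = cinner z x"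
proof (cases "\<forall>x. phi x = 0")
  case True then show ?thesis by (intro exI[of _ 0]) simp
next
  case False
  then obtain x0 where x0: "phi x0 \<noteq> 0" by blast
  have phi0: "phi 0 = 0" using add[of 0 0] by simp
  have phi_diff: "phi (a - b) = phi a - phi b" for a b using add[of "a - b" b] by simp
  have "bounded_linear phi"
    by (rule bounded_linear_intro[of _ K])
      (auto simp: add bound scale[of "complex_of_real _", simplified scaleC_of_real] scaleR_conv_of_real)
  define N where "N = {x. phi x = 0}"
  have clN: "closed N" unfolding N_def
    by (rule closed_Collect_eq) (auto intro: linear_continuous_on \<open>bounded_linear phi\<close>)
  have subN: "csubspace N" unfolding csubspace_def N_def by (auto simp: add scale phi0)
  define w where "w = x0 - orthoproj N x0"
  have wN: "cinner y w = 0" if "y \<in> N" for y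
    unfolding w_def by (rule orthoproj_orthogonal[OF clN subN that])
  have "phi (orthoproj N x0) = 0" using orthoproj_in[OF clN subN, of x0] unfolding N_def by simp
  then have "phi w = phi x0" unfolding w_def by (simp add: phi_diff)
  then have "w \<noteq> 0" using x0 phi0 by auto
  then have "cinner w w \<noteq> 0" by (simp add: cinner_self_eq_zero)
  have "phi x = cinner (scaleC (cnj (phi w) / cnj (cinner w w)) w) x" for x
  proof -
    have "scaleC (phi x) w - scaleC (phi w) x \<in> N"
      unfolding N_def by (simp add: phi_diff scale)
    then have "cinner (scaleC (phi x) w - scaleC (phi w) x) w = 0" by (rule wN)
    then have "cinner w (scaleC (phi x) w - scaleC (phi w) x) = 0"
      by (subst cinner_commute) simp
    then have "phi x * cinner w w = phi w * cinner w x"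
      by (simp add: cinner_diff_right cinner_scaleC_right)
    then have "phi x = phi w / cinner w w * cinner w x"
      using \<open>cinner w w \<noteq> 0\<close> by (simp add: field_simps)
    then show ?thesis by (simp add: cinner_scaleC_left)
  qed
  then show ?thesis by blast
qed

context
  fixes T :: "'a::chilbert \<Rightarrow> 'a"
  assumes T: "bounded_clinear T"
begin

lemma adjoint_exists: "\<exists>S. \<forall>x y. cinner (T x) y = cinner x (S y)"
proof -
  obtain K where K: "K > 0" "\<forall>x. norm (T x) \<le> norm x * K"
    using bounded_clinear_pos_bound[OF T] by blast
  have "\<exists>z. \<forall>x. cinner y (T x) = cinner z x" for y
  proof (rule riesz_representation[of _ "norm y * K"])
    show "norm (cinner y (T x)) \<le> norm x * (norm y * K)" for x
    proof -
      have "norm (cinner y (T x)) \<le> norm y * norm (T x)" by (rule cinner_Cauchy_Schwarz)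
      also have "\<dots> \<le> norm y * (norm x * K)" using K by (intro mult_left_mono) auto
      finally show ?thesis by (simp add: mult_ac)
    qed
  qed (simp_all add: clinear_add[OF T] clinear_scaleC[OF T] cinner_add_right cinner_scaleC_right)
  then obtain S where "\<And>y x. cinner y (T x) = cinner (S y) x" by metis
  then have "cinner (T x) y = cinner x (S y)" for x y
    using cinner_commute[of "T x" y] cinner_commute[of x "S y"] by simp
  then show ?thesis by blast
qed

lemma cinner_adj_right: "cinner (T x) y = cinner x (adj T y)"
proof -
  obtain S where S: "\<forall>x y. cinner (T x) y = cinner x (S y)"
    using adjoint_exists by blast
  then have "adj T = S" by (intro adj_eqI) blast
  then show ?thesis using S by simp
qed

lemma cinner_adj_left: "cinner (adj T x) y = cinner x (T y)"
  using cinner_adj_right[of y x] by (metis cinner_commute)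

lemma bounded_clinear_adj: "bounded_clinear (adj T)"
proof -
  obtain K where K: "K > 0" "\<forall>x. norm (T x) \<le> norm x * K"
    using bounded_clinear_pos_bound[OF T] by blast
  have "norm (adj T y) \<le> norm y * K" for y
  proof -
    have "(norm (adj T y))\<^sup>2 = Re (cinner (T (adj T y)) y)"
      by (simp add: power2_norm_eq_cinner cinner_adj_right)
    also have "\<dots> \<le> cmod (cinner (T (adj T y)) y)" by (rule complex_Re_le_cmod)
    also have "\<dots> \<le> norm (T (adj T y)) * norm y" by (rule cinner_Cauchy_Schwarz)
    also have "\<dots> \<le> (norm (adj T y) * K) * norm y" using K by (intro mult_right_mono) auto
    finally have "(norm (adj T y))\<^sup>2 \<le> norm (adj T y) * (norm y * K)" by (simp add: mult_ac)
    then show ?thesis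
      using K by (cases "norm (adj T y) = 0") (auto simp: power2_eq_square)
  qed
  moreover have "adj T (x + y) = adj T x + adj T y" for x y
    by (rule cinner_ext_right) (simp add: cinner_adj_right[symmetric] cinner_add_right)
  moreover have "adj T (scaleC c x) = scaleC c (adj T x)" for c x
    by (rule cinner_ext_right) (simp add: cinner_adj_right[symmetric] cinner_scaleC_right)
  ultimately show ?thesis
    by (intro bounded_clinearI[of _ K]) auto
qed

end

definition selfadjoint :: "('a::chilbert \<Rightarrow> 'a) \<Rightarrow> bool" where
  "selfadjoint T \<longleftrightarrow> bounded_clinear T \<and> (\<forall>x y. cinner (T x) y = cinner x (T y))"

definition positive_op :: "('a::chilbert \<Rightarrow> 'a) \<Rightarrow> bool" where
  "positive_op T \<longleftrightarrow> selfadjoint T \<and> (\<forall>x. 0 \<le> Re (cinner (T x) x))"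

lemma selfadjointI:
  "bounded_clinear T \<Longrightarrow> (\<And>x y. cinner (T x) y = cinner x (T y)) \<Longrightarrow> selfadjoint T"
  unfolding selfadjoint_def by blast

lemma selfadjoint_bounded_clinear: "selfadjoint T \<Longrightarrow> bounded_clinear T"
  unfolding selfadjoint_def by blast

lemma selfadjoint_symmetric: "selfadjoint T \<Longrightarrow> cinner (T x) y = cinner x (T y)"
  unfolding selfadjoint_def by blast

lemma positive_opI: "selfadjoint T \<Longrightarrow> (\<And>x. 0 \<le> Re (cinner (T x) x)) \<Longrightarrow> positive_op T"
  unfolding positive_op_def by blast

lemma positive_op_selfadjoint: "positive_op T \<Longrightarrow> selfadjoint T"
  unfolding positive_op_def by blast

lemma positive_op_bounded_clinear: "positive_op T \<Longrightarrow> bounded_clinear T"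
  unfolding positive_op_def selfadjoint_def by blast

lemma positive_op_nonneg: "positive_op T \<Longrightarrow> 0 \<le> Re (cinner (T x) x)"
  unfolding positive_op_def by blast

lemma selfadjoint_iff_adj: "bounded_clinear T \<Longrightarrow> selfadjoint T \<longleftrightarrow> adj T = T"
  using adj_eqI[of T T] cinner_adj_right[of T] unfolding selfadjoint_def by auto

lemma selfadjoint_add: "selfadjoint S \<Longrightarrow> selfadjoint T \<Longrightarrow> selfadjoint (\<lambda>x. S x + T x)"
  by (rule selfadjointI) (auto simp: bounded_clinear_add selfadjoint_bounded_clinear
      cinner_add_left cinner_add_right selfadjoint_symmetric)

lemma selfadjoint_diff: "selfadjoint S \<Longrightarrow> selfadjoint T \<Longrightarrow> selfadjoint (\<lambda>x. S x - T x)"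
  by (rule selfadjointI) (auto simp: bounded_clinear_diff selfadjoint_bounded_clinear
      cinner_diff_left cinner_diff_right selfadjoint_symmetric)

lemma selfadjoint_scaleR: "selfadjoint T \<Longrightarrow> selfadjoint (\<lambda>x. scaleR r (T x))"
  by (rule selfadjointI) (auto simp: bounded_clinear_scaleR selfadjoint_bounded_clinear
      cinner_scaleR_left cinner_scaleR_right selfadjoint_symmetric)

lemma selfadjoint_ident: "selfadjoint (\<lambda>x::'a::chilbert. x)"
  by (rule selfadjointI) (auto simp: bounded_clinear_ident)

lemma selfadjoint_zero: "selfadjoint (\<lambda>x::'a::chilbert. 0)"
  by (rule selfadjointI) (auto simp: bounded_clinear_zero)

lemma selfadjoint_compose_commuting:
  assumes "selfadjoint S" "selfadjoint T" "\<And>x. S (T x) = T (S x)"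
  shows "selfadjoint (\<lambda>x. S (T x))"
proof (rule selfadjointI)
  show "bounded_clinear (\<lambda>x. S (T x))"
    by (rule bounded_clinear_compose[OF selfadjoint_bounded_clinear selfadjoint_bounded_clinear])
      fact+
  show "cinner (S (T x)) y = cinner x (S (T y))" for x y
    by (simp add: selfadjoint_symmetric[OF assms(1)] selfadjoint_symmetric[OF assms(2)] assms(3))
qed

lemma Re_cinner_square: "selfadjoint T \<Longrightarrow> Re (cinner (T (T x)) x) = (norm (T x))\<^sup>2"
  by (simp add: selfadjoint_symmetric power2_norm_eq_cinner)

lemma positive_op_square: "selfadjoint T \<Longrightarrow> positive_op (\<lambda>x. T (T x))"
  by (rule positive_opI) (auto simp: selfadjoint_compose_commuting Re_cinner_square)

lemma positive_op_add: "positive_op S \<Longrightarrow> positive_op T \<Longrightarrow> positive_op (\<lambda>x. S x + T x)"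
  by (rule positive_opI)
    (auto simp: selfadjoint_add positive_op_selfadjoint cinner_add_left positive_op_nonneg
      intro: add_nonneg_nonneg)

lemma positive_op_scaleR: "positive_op T \<Longrightarrow> 0 \<le> r \<Longrightarrow> positive_op (\<lambda>x. scaleR r (T x))"
  by (rule positive_opI)
    (auto simp: selfadjoint_scaleR positive_op_selfadjoint cinner_scaleR_left positive_op_nonneg)

lemma positive_op_ident: "positive_op (\<lambda>x::'a::chilbert. x)"
  by (rule positive_opI) (auto simp: selfadjoint_ident cinner_self_nonneg)

lemma positive_op_zero: "positive_op (\<lambda>x::'a::chilbert. 0)"
  by (rule positive_opI) (auto simp: selfadjoint_zero)

lemma abs_Re_cinner_le_bound:
  assumes "\<And>x. norm (T x) \<le> norm x * K"
  shows "\<bar>Re (cinner (T x) x)\<bar> \<le> K * (norm x)\<^sup>2"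
proof -
  have "\<bar>Re (cinner (T x) x)\<bar> \<le> cmod (cinner (T x) x)" by (rule abs_Re_le_cmod)
  also have "\<dots> \<le> norm (T x) * norm x" by (rule cinner_Cauchy_Schwarz)
  also have "\<dots> \<le> (norm x * K) * norm x" by (intro mult_right_mono assms) auto
  finally show ?thesis by (simp add: power2_eq_square mult_ac)
qed

lemma Re_cinner_le_bound:
  assumes "\<And>x. norm (T x) \<le> norm x * K"
  shows "Re (cinner (T x) x) \<le> K * (norm x)\<^sup>2"
  using abs_Re_cinner_le_bound[of T K x, OF assms] by linarith

lemma positive_op_Cauchy_Schwarz:
  assumes T: "positive_op T"
  shows "(cmod (cinner (T x) y))\<^sup>2 \<le> Re (cinner (T x) x) * Re (cinner (T y) y)"
proof (rule hermitian_form_Cauchy_Schwarz[where f = "\<lambda>x y. cinner (T x) y"])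
  show "cinner (T v) u = cnj (cinner (T u) v)" for u v
    using selfadjoint_symmetric[OF positive_op_selfadjoint[OF T], of v u]
      cinner_commute[of v "T u"] by simp
qed (simp_all add: cinner_add_right cinner_scaleC_right positive_op_nonneg[OF T])

lemma positive_op_norm_square_le:
  assumes T: "positive_op T" and c: "\<And>x. Re (cinner (T x) x) \<le> c * (norm x)\<^sup>2"
  shows "(norm (T x))\<^sup>2 \<le> c * Re (cinner (T x) x)"
proof (cases "T x = 0")
  case True then show ?thesis by simp
next
  case False
  have "((norm (T x))\<^sup>2)\<^sup>2 = (cmod (cinner (T x) (T x)))\<^sup>2"
    unfolding cinner_self_eq_norm norm_of_real by simp
  also have "\<dots> \<le> Re (cinner (T x) x) * Re (cinner (T (T x)) (T x))"
    by (rule positive_op_Cauchy_Schwarz[OF T])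
  also have "\<dots> \<le> Re (cinner (T x) x) * (c * (norm (T x))\<^sup>2)"
    by (intro mult_left_mono c positive_op_nonneg[OF T])
  finally show ?thesis
    using False by (simp add: power2_eq_square mult_ac mult_le_cancel_right)
qed

lemma positive_op_norm_le:
  assumes T: "positive_op T" and c: "\<And>x. Re (cinner (T x) x) \<le> c * (norm x)\<^sup>2" "0 \<le> c"
  shows "norm (T x) \<le> c * norm x"
proof -
  have "(norm (T x))\<^sup>2 \<le> c * Re (cinner (T x) x)"
    by (rule positive_op_norm_square_le[OF T c(1)])
  also have "\<dots> \<le> c * (c * (norm x)\<^sup>2)"
    by (intro mult_left_mono c)
  finally have "(norm (T x))\<^sup>2 \<le> (c * norm x)\<^sup>2" by (simp add: power2_eq_square mult_ac)
  then show ?thesis using c by (simp add: power2_le_iff_abs_le)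
qed

lemma positive_op_form_zero:
  assumes T: "positive_op T" and z: "Re (cinner (T x) x) = 0"
  shows "T x = 0"
proof -
  obtain K where "\<forall>x. norm (T x) \<le> norm x * K"
    using bounded_clinear_pos_bound[OF positive_op_bounded_clinear[OF T]] by blast
  then have "(norm (T x))\<^sup>2 \<le> K * Re (cinner (T x) x)"
    by (intro positive_op_norm_square_le[OF T] Re_cinner_le_bound) auto
  then show ?thesis using z by simp
qed

lemma selfadjoint_norm_le:
  assumes D: "selfadjoint D" and c: "\<And>x. \<bar>Re (cinner (D x) x)\<bar> \<le> c * (norm x)\<^sup>2" "0 \<le> c"
  shows "norm (D x) \<le> 3 * c * norm x"
proof -
  \<comment> \<open>\<open>D + c\<close> is positive with form bounded by \<open>2c\<close>\<close>
  define P where "P = (\<lambda>x. D x + scaleR c x)"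
  have form: "Re (cinner (P x) x) = Re (cinner (D x) x) + c * (norm x)\<^sup>2" for x
    by (simp add: P_def cinner_add_left cinner_scaleR_left power2_norm_eq_cinner)
  have P: "positive_op P"
  proof (rule positive_opI)
    show "selfadjoint P" unfolding P_def by (rule selfadjoint_add[OF D selfadjoint_scaleR[OF selfadjoint_ident]])
    show "0 \<le> Re (cinner (P x) x)" for x using c(1)[of x] form[of x] by linarith
  qed
  have "norm (P x) \<le> (2 * c) * norm x"
    by (rule positive_op_norm_le[OF P]) (use c form in \<open>auto simp: abs_le_iff\<close>)
  moreover have "norm (D x) \<le> norm (P x) + c * norm x"
    using norm_triangle_ineq4[of "P x" "scaleR c x"] c unfolding P_def by simp
  ultimately show ?thesis by simp
qed

section \<open>Square roots of positive operators\<close>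

lemma Cauchy_if_square_dist_le:
  fixes f :: "nat \<Rightarrow> 'a::real_normed_vector" and g :: "nat \<Rightarrow> real"
  assumes g: "convergent g" and le: "\<And>m n. m \<le> n \<Longrightarrow> (norm (f n - f m))\<^sup>2 \<le> \<bar>g n - g m\<bar>"
  shows "Cauchy f"
proof (rule metric_CauchyI)
  fix e :: real assume e: "0 < e"
  then obtain N where N: "\<And>m n. m \<ge> N \<Longrightarrow> n \<ge> N \<Longrightarrow> dist (g m) (g n) < e\<^sup>2"
    using metric_CauchyD[OF convergent_Cauchy[OF g], of "e\<^sup>2"] by auto
  have "(norm (f m - f n))\<^sup>2 < e\<^sup>2" if "m \<ge> N" "n \<ge> N" for m n
  proof (cases "m \<le> n")
    case True
    then show ?thesis
      using le[OF True] N[OF that] by (simp add: norm_minus_commute dist_real_def abs_minus_commute)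
  next
    case False
    then show ?thesis
      using le[of n m] N[OF that] by (simp add: dist_real_def)
  qed
  then have "dist (f m) (f n) < e" if "m \<ge> N" "n \<ge> N" for m n
    using power_less_imp_less_base[of "norm (f m - f n)" 2 e] that e by (simp add: dist_norm)
  then show "\<exists>M. \<forall>m\<ge>M. \<forall>n\<ge>M. dist (f m) (f n) < e" by blast
qed

lemma positive_op_sub_square:
  assumes P: "positive_op P" and IP: "positive_op (\<lambda>x. x - P x)"
  shows "positive_op (\<lambda>x. P x - P (P x))" and "positive_op (\<lambda>x. x - (P x - P (P x)))"
proof -
  have Pb: "bounded_clinear P" and Ps: "selfadjoint P"
    using P by (auto intro: positive_op_bounded_clinear positive_op_selfadjoint)
  have Pss: "selfadjoint (\<lambda>x. P x - P (P x))"
    by (rule selfadjoint_diff[OF Ps selfadjoint_compose_commuting[OF Ps Ps]]) simp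
  show "positive_op (\<lambda>x. P x - P (P x))"
  proof (rule positive_opI[OF Pss])
    \<comment> \<open>\<open>P - P\<^sup>2 = P (1 - P) P + (1 - P) P (1 - P)\<close>\<close>
    fix x
    have "cinner (P x - P (P x)) x
        = cinner (P x - P (P x)) (P x) + cinner (P (x - P x)) (x - P x)"
      by (simp add: clinear_diff[OF Pb] cinner_diff_left cinner_diff_right)
    moreover have "0 \<le> Re (cinner (P x - P (P x)) (P x))"
      using positive_op_nonneg[OF IP, of "P x"] by simp
    moreover have "0 \<le> Re (cinner (P (x - P x)) (x - P x))"
      by (rule positive_op_nonneg[OF P])
    ultimately show "0 \<le> Re (cinner (P x - P (P x)) x)" by simp
  qed
  show "positive_op (\<lambda>x. x - (P x - P (P x)))"
  proof (rule positive_opI)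
    show "selfadjoint (\<lambda>x. x - (P x - P (P x)))"
      by (rule selfadjoint_diff[OF selfadjoint_ident Pss])
    fix x
    have "Re (cinner (x - (P x - P (P x))) x) = Re (cinner (x - P x) x) + (norm (P x))\<^sup>2"
      using Re_cinner_square[OF Ps, of x] by (simp add: cinner_diff_left)
    then show "0 \<le> Re (cinner (x - (P x - P (P x))) x)"
      using positive_op_nonneg[OF IP, of x] by simp
  qed
qed

context
  fixes P :: "nat \<Rightarrow> 'a::chilbert \<Rightarrow> 'a"
  assumes P0: "positive_op (P 0)" "positive_op (\<lambda>x. x - P 0 x)"
    and P_Suc: "\<And>n. P (Suc n) = (\<lambda>x. P n x - P n (P n x))"
begin

lemma positive_op_sub_square_iterate: "positive_op (P n) \<and> positive_op (\<lambda>x. x - P n x)"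
  by (induction n) (auto simp: P0 P_Suc intro: positive_op_sub_square)

lemma sub_square_iterate_sum: "P 0 x = (\<Sum>k<n. P k (P k x)) + P n x"
  by (induction n) (simp_all add: P_Suc)

lemma tendsto_sum_sub_square_iterate: "(\<lambda>n. \<Sum>k<n. P k (P k x)) \<longlonglongrightarrow> P 0 x"
proof -
  \<comment> \<open>\<open>\<langle>P\<^sub>0 x, x\<rangle> = \<Sum>\<^sub>k<\<^sub>n \<parallel>P\<^sub>k x\<parallel>\<^sup>2 + \<langle>P\<^sub>n x, x\<rangle>\<close> bounds the series \<open>\<Sum> \<parallel>P\<^sub>k x\<parallel>\<^sup>2\<close>\<close>
  have sa: "selfadjoint (P k)" for k
    using positive_op_sub_square_iterate by (blast intro: positive_op_selfadjoint)
  have form: "Re (cinner (P 0 x) x) = (\<Sum>k<n. (norm (P k x))\<^sup>2) + Re (cinner (P n x) x)" for n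
    by (subst sub_square_iterate_sum[of x n])
      (simp add: cinner_add_left cinner_sum_left Re_cinner_square[OF sa])
  have "summable (\<lambda>k. (norm (P k x))\<^sup>2)"
  proof (rule summableI_nonneg_bounded)
    show "(\<Sum>k<n. (norm (P k x))\<^sup>2) \<le> Re (cinner (P 0 x) x)" for n
      using form[of n] positive_op_nonneg positive_op_sub_square_iterate by fastforce
  qed simp
  then have "(\<lambda>k. norm (P k x)) \<longlonglongrightarrow> 0"
    using summable_LIMSEQ_zero tendsto_real_sqrt by fastforce
  then have "(\<lambda>n. P 0 x - P n x) \<longlonglongrightarrow> P 0 x - 0"
    by (intro tendsto_diff tendsto_const) (simp add: tendsto_norm_zero_iff)
  moreover have "P 0 x - P n x = (\<Sum>k<n. P k (P k x))" for n
    using sub_square_iterate_sum[of x n] by (simp add: diff_eq_eq)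
  ultimately show ?thesis by simp
qed

end

lemma positive_op_compose_commuting:
  assumes S: "positive_op S" and T: "positive_op T" and comm: "\<And>x. S (T x) = T (S x)"
  shows "positive_op (\<lambda>x. S (T x))"
proof (rule positive_opI)
  show "selfadjoint (\<lambda>x. S (T x))"
    using S T comm by (simp add: selfadjoint_compose_commuting positive_op_selfadjoint)
  have Tb: "bounded_clinear T" by (rule positive_op_bounded_clinear[OF T])
  obtain K where K: "K > 0" "\<And>x. norm (S x) \<le> norm x * K"
    using bounded_clinear_pos_bound[OF positive_op_bounded_clinear[OF S]] by blast
  \<comment> \<open>scale \<open>S\<close> into \<open>[0, 1]\<close> and write it as \<open>\<Sum>\<^sub>k P\<^sub>k\<^sup>2\<close> with every \<open>P\<^sub>k\<close> commuting with \<open>T\<close>\<close>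
  define P where "P n = ((\<lambda>F x. F x - F (F x)) ^^ n) (\<lambda>x. scaleR (1/K) (S x))" for n
  have P_0: "P 0 = (\<lambda>x. scaleR (1/K) (S x))" and P_Suc: "P (Suc n) = (\<lambda>x. P n x - P n (P n x))" for n
    unfolding P_def by simp_all
  have P0: "positive_op (P 0)" "positive_op (\<lambda>x. x - P 0 x)"
  proof -
    show "positive_op (P 0)"
      unfolding P_0 by (rule positive_op_scaleR[OF S]) (use K in simp)
    show "positive_op (\<lambda>x. x - P 0 x)"
    proof (rule positive_opI)
      show "selfadjoint (\<lambda>x. x - P 0 x)"
        by (rule selfadjoint_diff[OF selfadjoint_ident positive_op_selfadjoint]) fact
      show "0 \<le> Re (cinner (x - P 0 x) x)" for x
        using Re_cinner_le_bound[OF K(2), of x] K(1)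
        by (simp add: P_0 cinner_diff_left cinner_scaleR_left power2_norm_eq_cinner field_simps)
    qed
  qed
  have commT: "T (P n x) = P n (T x)" for n x
    by (induction n arbitrary: x) (simp_all add: P_0 P_Suc clinear_scaleR[OF Tb] clinear_diff[OF Tb] comm)
  fix x
  have lim: "(\<lambda>n. \<Sum>k<n. P k (P k x)) \<longlonglongrightarrow> P 0 x"
    by (rule tendsto_sum_sub_square_iterate[of P, OF P0 P_Suc])
  have "0 \<le> Re (cinner (\<Sum>k<n. P k (P k x)) (T x))" for n
  proof -
    have "selfadjoint (P k)" for k
      using positive_op_sub_square_iterate[of P, OF P0 P_Suc] positive_op_selfadjoint by blast
    then have "cinner (P k (P k x)) (T x) = cinner (T (P k x)) (P k x)" for k
      by (simp add: selfadjoint_symmetric[OF positive_op_selfadjoint[OF T]] selfadjoint_symmetric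
          commT)
    then show ?thesis
      by (simp add: cinner_sum_left sum_nonneg positive_op_nonneg[OF T])
  qed
  moreover have "(\<lambda>n. Re (cinner (\<Sum>k<n. P k (P k x)) (T x))) \<longlonglongrightarrow> Re (cinner (P 0 x) (T x))"
    by (intro tendsto_Re tendsto_cinner tendsto_const lim)
  ultimately have "0 \<le> Re (cinner (P 0 x) (T x))"
    by (intro LIMSEQ_le_const) auto
  moreover have "cinner (P 0 x) (T x) = complex_of_real (1/K) * cinner (S (T x)) x"
    by (simp add: P_0 cinner_scaleR_left selfadjoint_symmetric[OF positive_op_selfadjoint[OF T]] comm)
  ultimately show "0 \<le> Re (cinner (S (T x)) x)"
    using K by (simp add: zero_le_divide_iff)
qed

definition sqrt_iter :: "('a::chilbert \<Rightarrow> 'a) \<Rightarrow> nat \<Rightarrow> 'a \<Rightarrow> 'a" where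
  "sqrt_iter B n = ((\<lambda>F x. F x + scaleR (1/2) (B x - F (F x))) ^^ n) (\<lambda>x. 0)"

lemma sqrt_iter_0 [simp]: "sqrt_iter B 0 = (\<lambda>x. 0)"
  by (simp add: sqrt_iter_def)

lemma sqrt_iter_Suc:
  "sqrt_iter B (Suc n) = (\<lambda>x. sqrt_iter B n x + scaleR (1/2) (B x - sqrt_iter B n (sqrt_iter B n x)))"
  by (simp add: sqrt_iter_def)

context
  fixes B :: "'a::chilbert \<Rightarrow> 'a"
  assumes B: "positive_op B" and B_le_one: "\<And>x. Re (cinner (B x) x) \<le> (norm x)\<^sup>2"
begin

private abbreviation C where "C \<equiv> sqrt_iter B"

lemma bounded_clinear_sqrt_iter: "bounded_clinear (C n)"
  by (induction n) (simp_all add: sqrt_iter_Suc bounded_clinear_zero bounded_clinear_add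
      bounded_clinear_scaleR bounded_clinear_diff bounded_clinear_compose positive_op_bounded_clinear[OF B])

lemma sqrt_iter_commute:
  assumes T: "bounded_clinear T" "\<And>x. T (B x) = B (T x)"
  shows "T (C n x) = C n (T x)"
  by (induction n arbitrary: x)
    (simp_all add: sqrt_iter_Suc clinear_add[OF T(1)] clinear_scaleR[OF T(1)] clinear_diff[OF T(1)]
      clinear_zero[OF T(1)] T(2))

lemma sqrt_iter_commute_B: "C n (B x) = B (C n x)"
  by (rule sqrt_iter_commute[symmetric]) (auto simp: positive_op_bounded_clinear[OF B])

lemma sqrt_iter_commute_sqrt_iter: "C n (C m x) = C m (C n x)"
  by (rule sqrt_iter_commute[symmetric]) (auto simp: bounded_clinear_sqrt_iter sqrt_iter_commute_B)

lemma selfadjoint_sqrt_iter: "selfadjoint (C n)"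
proof (induction n)
  case (Suc n)
  show ?case unfolding sqrt_iter_Suc
    by (rule selfadjoint_add[OF Suc selfadjoint_scaleR[OF selfadjoint_diff[OF
          positive_op_selfadjoint[OF B] selfadjoint_compose_commuting[OF Suc Suc]]]]) simp
qed (simp add: selfadjoint_zero)

lemma positive_op_one_minus_sqrt_iter: "positive_op (\<lambda>x. x - C n x)"
proof (cases n)
  case 0 then show ?thesis by (simp add: positive_op_ident)
next
  case (Suc m)
  have s: "selfadjoint (\<lambda>x. x - C m x)" by (rule selfadjoint_diff[OF selfadjoint_ident selfadjoint_sqrt_iter])
  show ?thesis
  proof (rule positive_opI)
    show "selfadjoint (\<lambda>x. x - C n x)" by (rule selfadjoint_diff[OF selfadjoint_ident selfadjoint_sqrt_iter])
    fix x
    \<comment> \<open>\<open>1 - C\<^sub>m\<^sub>+\<^sub>1 = ((1 - C\<^sub>m)\<^sup>2 + (1 - B)) / 2\<close>\<close>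
    have "x - C n x = scaleR (1/2) ((x - C m x) - C m (x - C m x)) + scaleR (1/2) (x - B x)"
      unfolding Suc sqrt_iter_Suc
      by (simp add: clinear_diff[OF bounded_clinear_sqrt_iter] algebra_simps scaleR_add_left[symmetric])
    then have "Re (cinner (x - C n x) x) = (1/2) * (norm (x - C m x))\<^sup>2
        + (1/2) * ((norm x)\<^sup>2 - Re (cinner (B x) x))"
      using Re_cinner_square[OF s, of x]
      by (simp add: cinner_add_left cinner_scaleR_left cinner_diff_left power2_norm_eq_cinner)
    then show "0 \<le> Re (cinner (x - C n x) x)" using B_le_one[of x] by simp
  qed
qed

lemma positive_op_sqrt_iter_step: "positive_op (\<lambda>x. C (Suc n) x - C n x)"
proof (induction n)
  case 0
  show ?case using positive_op_scaleR[OF B, of "1/2"] by (simp add: sqrt_iter_Suc)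
next
  case (Suc n)
  \<comment> \<open>\<open>C\<^sub>n\<^sub>+\<^sub>2 - C\<^sub>n\<^sub>+\<^sub>1 = (C\<^sub>n\<^sub>+\<^sub>1 - C\<^sub>n) G\<close> with \<open>G = ((1 - C\<^sub>n\<^sub>+\<^sub>1) + (1 - C\<^sub>n)) / 2\<close> positive and commuting\<close>
  define G where "G = (\<lambda>x. scaleR (1/2) ((x - C (Suc n) x) + (x - C n x)))"
  have G: "positive_op G" unfolding G_def
    by (rule positive_op_scaleR[OF positive_op_add[OF positive_op_one_minus_sqrt_iter
          positive_op_one_minus_sqrt_iter]]) simp
  have lin: "C k (a + b) = C k a + C k b" "C k (a - b) = C k a - C k b"
    "C k (scaleR r a) = scaleR r (C k a)" for k a b r
    by (simp_all add: clinear_add[OF bounded_clinear_sqrt_iter] clinear_diff[OF bounded_clinear_sqrt_iter]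
        clinear_scaleR[OF bounded_clinear_sqrt_iter])
  have linB: "B (a + b) = B a + B b" "B (a - b) = B a - B b" "B (scaleR r a) = scaleR r (B a)" for a b r
    by (simp_all add: clinear_add clinear_diff clinear_scaleR positive_op_bounded_clinear[OF B])
  have half: "scaleR (1/4) v + scaleR (1/4) v = scaleR (1/2) v"
    "scaleR (1/4) v + (scaleR (1/4) v + w) = scaleR (1/2) v + w"
    "scaleR (1/2) v + (scaleR (1/2) v + w) = v + w" for v w :: 'a
    by (simp_all add: scaleR_add_left[symmetric] add.assoc[symmetric])
  have "C (Suc (Suc n)) x - C (Suc n) x = C (Suc n) (G x) - C n (G x)" for x
    unfolding G_def sqrt_iter_Suc
    by (simp add: lin linB sqrt_iter_commute_B sqrt_iter_commute_sqrt_iter algebra_simps half)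
  moreover have "C (Suc n) (G x) - C n (G x) = G (C (Suc n) x - C n x)" for x
    unfolding G_def sqrt_iter_Suc
    by (simp add: lin linB sqrt_iter_commute_B sqrt_iter_commute_sqrt_iter algebra_simps half)
  ultimately show ?case
    using positive_op_compose_commuting[OF Suc G] by simp
qed

lemma positive_op_sqrt_iter_diff: "n \<le> m \<Longrightarrow> positive_op (\<lambda>x. C m x - C n x)"
proof (induction m rule: dec_induct)
  case (step m)
  have "positive_op (\<lambda>x. (C (Suc m) x - C m x) + (C m x - C n x))"
    by (rule positive_op_add[OF positive_op_sqrt_iter_step step.IH])
  then show ?case by simp
qed (simp add: positive_op_zero)

lemma positive_op_sqrt_iter: "positive_op (C n)"
  using positive_op_sqrt_iter_diff[of 0 n] by simp

lemma Re_cinner_sqrt_iter_le: "Re (cinner (C n x) x) \<le> (norm x)\<^sup>2"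
  using positive_op_nonneg[OF positive_op_one_minus_sqrt_iter[of n], of x]
  by (simp add: cinner_diff_left power2_norm_eq_cinner)

lemma norm_sqrt_iter_le: "norm (C n x) \<le> norm x"
  using positive_op_norm_le[OF positive_op_sqrt_iter[of n], of 1 x] Re_cinner_sqrt_iter_le by simp

lemma convergent_sqrt_iter: "convergent (\<lambda>n. C n x)"
proof -
  \<comment> \<open>\<open>\<langle>C\<^sub>n x, x\<rangle>\<close> is increasing and bounded, and controls \<open>\<parallel>C\<^sub>m x - C\<^sub>n x\<parallel>\<^sup>2\<close>\<close>
  define q where "q n = Re (cinner (C n x) x)" for n
  have sq: "(norm (C m x - C n x))\<^sup>2 \<le> q m - q n" if "n \<le> m" for n m
  proof -
    have P: "positive_op (\<lambda>x. C m x - C n x)" by (rule positive_op_sqrt_iter_diff[OF that])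
    have "Re (cinner (C m y - C n y) y) \<le> 1 * (norm y)\<^sup>2" for y
      using Re_cinner_sqrt_iter_le[of m y] positive_op_nonneg[OF positive_op_sqrt_iter[of n], of y]
      by (simp add: cinner_diff_left)
    from positive_op_norm_square_le[OF P this] show ?thesis
      by (simp add: q_def cinner_diff_left)
  qed
  have "incseq q"
    using sq by (intro incseq_SucI) (smt (verit) le_add2 plus_1_eq_Suc zero_le_power2)
  moreover have "q n \<le> (norm x)\<^sup>2" for n
    using Re_cinner_sqrt_iter_le by (simp add: q_def)
  ultimately have "convergent q"
    using incseq_convergent convergent_def by metis
  then have "Cauchy (\<lambda>n. C n x)"
    by (rule Cauchy_if_square_dist_le) (use sq in fastforce)
  then show ?thesis by (simp add: Cauchy_convergent_iff)
qed

lemma tendsto_sqrt_iter: "(\<lambda>n. C n x) \<longlonglongrightarrow> lim (\<lambda>n. C n x)"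
  using convergent_sqrt_iter by (simp add: convergent_LIMSEQ_iff)

lemma positive_sqrt_exists_le_one:
  "\<exists>R. positive_op R \<and> (\<forall>x. R (R x) = B x) \<and>
     (\<forall>T. bounded_clinear T \<and> (\<forall>x. T (B x) = B (T x)) \<longrightarrow> (\<forall>x. T (R x) = R (T x)))"
proof (intro exI conjI allI impI)
  define R where "R x = lim (\<lambda>n. C n x)" for x
  have lim: "(\<lambda>n. C n x) \<longlonglongrightarrow> R x" for x
    unfolding R_def by (rule tendsto_sqrt_iter)
  have Cb: "bounded_clinear (C n)" for n by (rule bounded_clinear_sqrt_iter)
  have "bounded_clinear R"
  proof (rule bounded_clinearI[of _ 1])
    show "R (x + y) = R x + R y" for x y
      using lim[of "x + y"] tendsto_add[OF lim lim, of x y] by (simp add: clinear_add[OF Cb] LIMSEQ_unique)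
    show "R (scaleC c x) = scaleC c (R x)" for c x
      using lim[of "scaleC c x"] tendsto_clinear[OF bounded_clinear_scaleC[OF bounded_clinear_ident] lim]
      by (simp add: clinear_scaleC[OF Cb] LIMSEQ_unique)
    show "norm (R x) \<le> norm x * 1" for x
      using LIMSEQ_le_const2[OF tendsto_norm[OF lim[of x]], of "norm x"] norm_sqrt_iter_le by simp
  qed
  moreover have "cinner (R x) y = cinner x (R y)" for x y
    using tendsto_cinner[OF lim tendsto_const, of x y] tendsto_cinner[OF tendsto_const lim, of x y]
    by (simp add: selfadjoint_symmetric[OF selfadjoint_sqrt_iter] LIMSEQ_unique)
  moreover have "0 \<le> Re (cinner (R x) x)" for x
    using tendsto_Re[OF tendsto_cinner[OF lim tendsto_const]]
    by (rule LIMSEQ_le_const) (use positive_op_nonneg[OF positive_op_sqrt_iter] in blast)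
  ultimately show "positive_op R"
    by (intro positive_opI selfadjointI)
  show "T (R x) = R (T x)" if "bounded_clinear T \<and> (\<forall>x. T (B x) = B (T x))" for T x
    using tendsto_clinear[OF _ lim, of T x] lim[of "T x"] that
    by (simp add: sqrt_iter_commute LIMSEQ_unique)
  show "R (R x) = B x" for x
  proof -
    \<comment> \<open>pass to the limit in the recursion \<open>C\<^sub>n\<^sub>+\<^sub>1 = C\<^sub>n + (B - C\<^sub>n\<^sup>2) / 2\<close>\<close>
    have "(\<lambda>n. C n (C n x - R x)) \<longlonglongrightarrow> 0"
    proof (rule Lim_null_comparison)
      show "\<forall>\<^sub>F n in sequentially. norm (C n (C n x - R x)) \<le> norm (C n x - R x)"
        using norm_sqrt_iter_le by simp
      show "(\<lambda>n. norm (C n x - R x)) \<longlonglongrightarrow> 0"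
        using tendsto_diff[OF lim tendsto_const, of x "R x"] by (simp add: tendsto_norm_zero_iff)
    qed
    from tendsto_add[OF this lim[of "R x"]] have "(\<lambda>n. C n (C n x)) \<longlonglongrightarrow> R (R x)"
      by (simp add: clinear_diff[OF Cb])
    then have "(\<lambda>n. C (Suc n) x) \<longlonglongrightarrow> R x + scaleR (1/2) (B x - R (R x))"
      unfolding sqrt_iter_Suc by (intro tendsto_add tendsto_scaleR tendsto_diff lim tendsto_const)
    with LIMSEQ_Suc[OF lim] have "R x + scaleR (1/2) (B x - R (R x)) = R x"
      using LIMSEQ_unique by blast
    then show ?thesis by simp
  qed
qed

end

lemma positive_sqrt_exists:
  assumes B: "positive_op B"
  shows "\<exists>R. positive_op R \<and> (\<forall>x. R (R x) = B x) \<and>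
     (\<forall>T. bounded_clinear T \<and> (\<forall>x. T (B x) = B (T x)) \<longrightarrow> (\<forall>x. T (R x) = R (T x)))"
proof -
  obtain K where K: "K > 0" "\<And>x. norm (B x) \<le> norm x * K"
    using bounded_clinear_pos_bound[OF positive_op_bounded_clinear[OF B]] by blast
  define B1 where "B1 = (\<lambda>x. scaleR (1/K) (B x))"
  have B1: "positive_op B1" unfolding B1_def by (rule positive_op_scaleR[OF B]) (use K in auto)
  have "Re (cinner (B1 x) x) \<le> (norm x)\<^sup>2" for x
    using Re_cinner_le_bound[OF K(2), of x] K(1) by (simp add: B1_def cinner_scaleR_left field_simps)
  then obtain R1 where R1: "positive_op R1" "\<forall>x. R1 (R1 x) = B1 x"
    "\<forall>T. bounded_clinear T \<and> (\<forall>x. T (B1 x) = B1 (T x)) \<longrightarrow> (\<forall>x. T (R1 x) = R1 (T x))"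
    using positive_sqrt_exists_le_one[OF B1] by blast
  have R1b: "bounded_clinear R1" by (rule positive_op_bounded_clinear[OF R1(1)])
  show ?thesis
  proof (intro exI conjI allI impI)
    show "positive_op (\<lambda>x. scaleR (sqrt K) (R1 x))"
      by (rule positive_op_scaleR[OF R1(1)]) (use K in simp)
    show "scaleR (sqrt K) (R1 (scaleR (sqrt K) (R1 x))) = B x" for x
      using R1(2) K(1) by (simp add: clinear_scaleR[OF R1b] B1_def)
    show "T (scaleR (sqrt K) (R1 x)) = scaleR (sqrt K) (R1 (T x))"
      if T: "bounded_clinear T \<and> (\<forall>x. T (B x) = B (T x))" for T x
      using R1(3) T by (simp add: B1_def clinear_scaleR)
  qed
qed

definition orth_proj :: "('a::chilbert \<Rightarrow> 'a) \<Rightarrow> bool" where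
  "orth_proj P \<longleftrightarrow> selfadjoint P \<and> (\<forall>x. P (P x) = P x)"

lemma orth_proj_selfadjoint: "orth_proj P \<Longrightarrow> selfadjoint P"
  unfolding orth_proj_def by blast

lemma orth_proj_bounded_clinear: "orth_proj P \<Longrightarrow> bounded_clinear P"
  unfolding orth_proj_def selfadjoint_def by blast

lemma orth_proj_idem: "orth_proj P \<Longrightarrow> P (P x) = P x"
  unfolding orth_proj_def by blast

lemma orth_proj_symmetric: "orth_proj P \<Longrightarrow> cinner (P x) y = cinner x (P y)"
  unfolding orth_proj_def selfadjoint_def by blast

lemma orth_proj_iff_projection:
  "orth_proj P \<longleftrightarrow> bounded_clinear P \<and> P \<circ> P = P \<and> adj P = P"
  unfolding orth_proj_def comp_def fun_eq_iff[symmetric]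
  using selfadjoint_iff_adj selfadjoint_bounded_clinear by blast

lemma orth_proj_orthoproj: "closed M \<Longrightarrow> csubspace M \<Longrightarrow> orth_proj (orthoproj M)"
  unfolding orth_proj_def
  by (auto intro!: selfadjointI bounded_clinear_orthoproj orthoproj_symmetric orthoproj_fixed orthoproj_in)

lemma cinner_orth_proj_self:
  assumes P: "orth_proj P"
  shows "cinner (P x) x = complex_of_real ((norm (P x))\<^sup>2)"
proof -
  have "cinner (P x) x = cinner (P (P x)) x" by (simp add: orth_proj_idem[OF P])
  also have "\<dots> = cinner (P x) (P x)" by (rule orth_proj_symmetric[OF P])
  finally show ?thesis by (simp add: cinner_self_eq_norm)
qed

lemma orth_proj_range_iff: "orth_proj P \<Longrightarrow> y \<in> range P \<longleftrightarrow> P y = y"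
  using orth_proj_idem[of P] by (auto intro: range_eqI[of y P y, OF sym])

lemma closed_range_orth_proj:
  assumes P: "orth_proj P"
  shows "closed (range P)"
proof -
  have "range P = {y. P y - y = 0}" using orth_proj_range_iff[OF P] by auto
  moreover have "closed {y. P y - y = 0}"
    by (intro closed_Collect_eq continuous_intros continuous_on_clinear orth_proj_bounded_clinear P)
  ultimately show ?thesis by simp
qed

lemma csubspace_range_orth_proj: "orth_proj P \<Longrightarrow> csubspace (range P)"
  unfolding csubspace_def
  by (auto simp: orth_proj_range_iff clinear_add clinear_scaleC orth_proj_bounded_clinear)

lemma orth_proj_le_commute:
  assumes P: "orth_proj P" and Q: "orth_proj Q" and le: "range P \<subseteq> range Q"
  shows "Q (P x) = P x" "P (Q x) = P x"
proof -
  show QP: "Q (P x) = P x" for x using orth_proj_range_iff[OF Q] le by blast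
  show "P (Q x) = P x"
    by (rule cinner_ext_left) (simp add: orth_proj_symmetric[OF P] orth_proj_symmetric[OF Q] QP)
qed

lemma orth_proj_eqI:
  assumes P: "orth_proj P" and Q: "orth_proj Q" and r: "range P = range Q"
  shows "P = Q"
proof
  fix x
  have "P x = P (Q x)" using orth_proj_le_commute(2)[OF P Q, of x] r by simp
  also have "\<dots> = Q x" using orth_proj_le_commute(1)[OF Q P, of x] r by simp
  finally show "P x = Q x" .
qed

lemma norm_orth_proj_le:
  assumes P: "orth_proj P"
  shows "norm (P x) \<le> norm x"
proof -
  have "(norm (P x))\<^sup>2 = Re (cinner (P x) x)" using cinner_orth_proj_self[OF P, of x] by simp
  also have "\<dots> \<le> cmod (cinner (P x) x)" by (rule complex_Re_le_cmod)
  also have "\<dots> \<le> norm (P x) * norm x" by (rule cinner_Cauchy_Schwarz)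
  finally show ?thesis by (cases "P x = 0") (auto simp: power2_eq_square)
qed

lemma orth_proj_commute_if_invariant:
  fixes S G :: "'a::chilbert \<Rightarrow> 'a"
  assumes G: "orth_proj G" and S: "bounded_clinear S"
    and inv: "\<And>x. G (S (G x)) = S (G x)" and inv_adj: "\<And>x. G (adj S (G x)) = adj S (G x)"
  shows "G (S x) = S (G x)"
proof (rule cinner_ext_left)
  fix y
  have "cinner (G (S x)) y = cinner x (G (adj S (G y)))"
    by (simp add: orth_proj_symmetric[OF G] cinner_adj_right[OF S] inv_adj)
  also have "\<dots> = cinner (G (S (G x))) y"
    by (simp add: orth_proj_symmetric[OF G] cinner_adj_right[OF S])
  finally show "cinner (G (S x)) y = cinner (S (G x)) y" by (simp add: inv)
qed

lemma adj_commute_selfadjoint: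
  fixes S X :: "'a::chilbert \<Rightarrow> 'a"
  assumes S: "bounded_clinear S" and X: "selfadjoint X" and comm: "\<And>x. S (X x) = X (S x)"
  shows "adj S (X x) = X (adj S x)"
  by (rule cinner_ext_left)
    (simp add: cinner_adj_left[OF S] selfadjoint_symmetric[OF X] comm)

section \<open>The absolute value and the negative part of a self-adjoint operator\<close>

definition abs_op :: "('a::chilbert \<Rightarrow> 'a) \<Rightarrow> 'a \<Rightarrow> 'a" where
  "abs_op T = (SOME B. positive_op B \<and> (\<forall>x. B (B x) = T (T x)) \<and>
     (\<forall>S. bounded_clinear S \<and> (\<forall>x. S (T (T x)) = T (T (S x))) \<longrightarrow> (\<forall>x. S (B x) = B (S x))))"

definition neg_space :: "('a::chilbert \<Rightarrow> 'a) \<Rightarrow> 'a set" where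
  "neg_space T = {x. abs_op T x + T x = 0}"

definition neg_proj :: "('a::chilbert \<Rightarrow> 'a) \<Rightarrow> 'a \<Rightarrow> 'a" where
  "neg_proj T = orthoproj (neg_space T)"

context
  fixes T :: "'a::chilbert \<Rightarrow> 'a"
  assumes T: "selfadjoint T"
begin

lemma abs_op:
  "positive_op (abs_op T) \<and> (\<forall>x. abs_op T (abs_op T x) = T (T x)) \<and>
     (\<forall>S. bounded_clinear S \<and> (\<forall>x. S (T (T x)) = T (T (S x))) \<longrightarrow>
       (\<forall>x. S (abs_op T x) = abs_op T (S x)))"
proof -
  have "\<exists>B. positive_op B \<and> (\<forall>x. B (B x) = T (T x)) \<and>
     (\<forall>S. bounded_clinear S \<and> (\<forall>x. S (T (T x)) = T (T (S x))) \<longrightarrow> (\<forall>x. S (B x) = B (S x)))"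
    using positive_sqrt_exists[OF positive_op_square[OF T]] by simp
  then show ?thesis unfolding abs_op_def by (rule someI_ex)
qed

lemma positive_op_abs_op: "positive_op (abs_op T)"
  using abs_op by blast

lemma bounded_clinear_abs_op: "bounded_clinear (abs_op T)"
  by (rule positive_op_bounded_clinear[OF positive_op_abs_op])

lemma abs_op_square: "abs_op T (abs_op T x) = T (T x)"
  using abs_op by blast

lemma abs_op_commute:
  "bounded_clinear S \<Longrightarrow> (\<And>x. S (T x) = T (S x)) \<Longrightarrow> S (abs_op T x) = abs_op T (S x)"
  using abs_op by auto

lemma abs_op_commute_self: "T (abs_op T x) = abs_op T (T x)"
  by (rule abs_op_commute[OF selfadjoint_bounded_clinear[OF T]]) simp

lemma closed_neg_space: "closed (neg_space T)"
  unfolding neg_space_def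
  by (intro closed_Collect_eq continuous_intros continuous_on_clinear bounded_clinear_abs_op
      selfadjoint_bounded_clinear T)

lemma csubspace_neg_space: "csubspace (neg_space T)"
proof -
  have "abs_op T (x + y) + T (x + y) = (abs_op T x + T x) + (abs_op T y + T y)"
    "abs_op T (scaleC c x) + T (scaleC c x) = scaleC c (abs_op T x + T x)" for x y c
    by (simp_all add: clinear_add clinear_scaleC scaleC_add_right bounded_clinear_abs_op
        selfadjoint_bounded_clinear[OF T])
  then show ?thesis
    by (simp add: csubspace_def neg_space_def bounded_clinear_abs_op selfadjoint_bounded_clinear[OF T])
qed

lemma orth_proj_neg_proj: "orth_proj (neg_proj T)"
  unfolding neg_proj_def by (rule orth_proj_orthoproj[OF closed_neg_space csubspace_neg_space])

lemma neg_proj_fixed_iff: "neg_proj T y = y \<longleftrightarrow> abs_op T y + T y = 0"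
  using orth_proj_range_iff[OF orth_proj_neg_proj, of y]
    range_orthoproj[OF closed_neg_space csubspace_neg_space]
  unfolding neg_proj_def neg_space_def by auto

lemma neg_proj_commute:
  assumes S: "bounded_clinear S" and comm: "\<And>x. S (T x) = T (S x)"
  shows "neg_proj T (S x) = S (neg_proj T x)"
proof (rule orth_proj_commute_if_invariant[OF orth_proj_neg_proj S])
  have invariant: "neg_proj T (U (neg_proj T x)) = U (neg_proj T x)"
    if U: "bounded_clinear U" "\<And>x. U (T x) = T (U x)" for U x
  proof -
    have "abs_op T (neg_proj T x) + T (neg_proj T x) = 0"
      using neg_proj_fixed_iff orth_proj_idem[OF orth_proj_neg_proj] by blast
    then have "U (abs_op T (neg_proj T x) + T (neg_proj T x)) = 0" by (simp add: U(1))
    then show ?thesis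
      by (simp add: neg_proj_fixed_iff clinear_add[OF U(1)] abs_op_commute[OF U(1)] U(2))
  qed
  show "neg_proj T (S (neg_proj T x)) = S (neg_proj T x)" for x
    by (rule invariant[where U = S, OF S comm])
  show "neg_proj T (adj S (neg_proj T x)) = adj S (neg_proj T x)" for x
  proof (rule invariant[where U = "adj S", OF bounded_clinear_adj[OF S]])
    show "adj S (T x) = T (adj S x)" for x using adj_commute_selfadjoint[OF S T] comm by blast
  qed
qed

lemma neg_proj_form_nonpos: "neg_proj T y = y \<Longrightarrow> Re (cinner (T y) y) \<le> 0"
  using positive_op_nonneg[OF positive_op_abs_op, of y]
  by (simp add: neg_proj_fixed_iff eq_neg_iff_add_eq_0[symmetric] add.commute cinner_minus_left)

lemma neg_proj_kernel_form:
  assumes y: "neg_proj T y = 0"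
  shows "Re (cinner (T y) y) = Re (cinner (abs_op T y) y)"
proof -
  \<comment> \<open>\<open>(|T| + T) (|T| - T) = |T|\<^sup>2 - T\<^sup>2 = 0\<close>, so \<open>(|T| - T) y\<close> lies in the range of \<open>neg_proj T\<close>\<close>
  define w where "w = abs_op T y - T y"
  have "abs_op T w + T w = 0"
    unfolding w_def
    by (simp add: clinear_diff[OF bounded_clinear_abs_op] clinear_diff[OF selfadjoint_bounded_clinear[OF T]]
        abs_op_commute_self abs_op_square)
  then have "neg_proj T w = w" by (simp add: neg_proj_fixed_iff)
  then have "cinner w y = cinner (neg_proj T w) y" by simp
  also have "\<dots> = 0" by (simp add: orth_proj_symmetric[OF orth_proj_neg_proj] y)
  finally show ?thesis unfolding w_def by (simp add: cinner_diff_left)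
qed

lemma neg_proj_kernel_form_nonneg: "neg_proj T y = 0 \<Longrightarrow> 0 \<le> Re (cinner (T y) y)"
  using neg_proj_kernel_form positive_op_nonneg[OF positive_op_abs_op] by simp

lemma neg_proj_maximal:
  assumes S: "csubspace S" and invariant: "\<And>x. x \<in> S \<Longrightarrow> neg_proj T x \<in> S"
    and nonpos: "\<And>y. y \<in> S \<Longrightarrow> Re (cinner (T y) y) \<le> 0"
    and y: "y \<in> S"
  shows "neg_proj T y = y"
proof -
  \<comment> \<open>\<open>z = y - neg_proj T y\<close> lies in \<open>S\<close> and in the kernel, where the form of \<open>T\<close> is that of \<open>|T| \<ge> 0\<close>\<close>
  define z where "z = y - neg_proj T y"
  have "z \<in> S" unfolding z_def by (rule csubspace_diff[OF S y invariant[OF y]])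
  have Ez: "neg_proj T z = 0"
    unfolding z_def
    by (simp add: clinear_diff[OF orth_proj_bounded_clinear[OF orth_proj_neg_proj]]
        orth_proj_idem[OF orth_proj_neg_proj])
  then have "Re (cinner (abs_op T z) z) = 0"
    using neg_proj_kernel_form nonpos[OF \<open>z \<in> S\<close>] positive_op_nonneg[OF positive_op_abs_op, of z]
    by simp
  then have Bz: "abs_op T z = 0" by (rule positive_op_form_zero[OF positive_op_abs_op])
  then have "(norm (T z))\<^sup>2 = 0"
    using abs_op_square[of z] Re_cinner_square[OF T, of z] by (simp add: bounded_clinear_abs_op)
  then have "neg_proj T z = z" using Bz by (simp add: neg_proj_fixed_iff)
  then show ?thesis using Ez unfolding z_def by simp
qed

end

section \<open>The spectral family of a self-adjoint operator\<close>

lemma le_mult_right_if_above: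
  fixes a s c :: real
  assumes "\<And>u. s < u \<Longrightarrow> a \<le> u * c"
  shows "a \<le> s * c"
proof (rule tendsto_lowerbound)
  show "((\<lambda>u. u * c) \<longlongrightarrow> s * c) (at_right s)" by (intro tendsto_intros)
  show "\<forall>\<^sub>F u in at_right s. a \<le> u * c"
    using eventually_at_right_less[of s] by eventually_elim (rule assms)
qed simp

lemma mult_right_le_if_below:
  fixes a s c :: real
  assumes "\<And>u. u < s \<Longrightarrow> u * c \<le> a"
  shows "s * c \<le> a"
proof (rule tendsto_upperbound)
  show "((\<lambda>u. u * c) \<longlongrightarrow> s * c) (at_left s)" by (intro tendsto_intros)
  have "\<forall>\<^sub>F u in at_left s. u \<in> {s - 1<..<s}" by (rule eventually_at_left_real) simp
  then show "\<forall>\<^sub>F u in at_left s. u * c \<le> a" by eventually_elim (simp add: assms)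
qed simp

lemma sum_atLeast1_telescope:
  fixes f :: "nat \<Rightarrow> 'a::ab_group_add"
  shows "(\<Sum>k\<in>{1..n}. f k - f (k - 1)) = f n - f 0"
  by (induction n) (simp_all add: atLeastAtMostSuc_conv)

text \<open>\<open>spectral_proj A s\<close> is the spectral projection of \<open>A\<close> for \<open>]-\<infinity>, s]\<close>: it projects onto the
  subspace on which \<open>A - s = -\<bar>A - s\<bar>\<close>.\<close>

definition spectral_proj :: "('a::chilbert \<Rightarrow> 'a) \<Rightarrow> real \<Rightarrow> 'a \<Rightarrow> 'a" where
  "spectral_proj A s = neg_proj (\<lambda>x. A x - scaleR s x)"

context
  fixes A :: "'a::chilbert \<Rightarrow> 'a"
  assumes A: "selfadjoint A"
begin

private abbreviation E where "E \<equiv> spectral_proj A"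

lemma selfadjoint_shift: "selfadjoint (\<lambda>x. A x - scaleR s x)"
  by (rule selfadjoint_diff[OF A selfadjoint_scaleR[OF selfadjoint_ident]])

lemma orth_proj_spectral_proj: "orth_proj (E s)"
  unfolding spectral_proj_def by (rule orth_proj_neg_proj[OF selfadjoint_shift])

lemma bounded_clinear_spectral_proj: "bounded_clinear (E s)"
  by (rule orth_proj_bounded_clinear[OF orth_proj_spectral_proj])

lemma spectral_proj_idem: "E s (E s x) = E s x"
  by (rule orth_proj_idem[OF orth_proj_spectral_proj])

lemma spectral_proj_commute:
  assumes S: "bounded_clinear S" and comm: "\<And>x. S (A x) = A (S x)"
  shows "E s (S x) = S (E s x)"
  unfolding spectral_proj_def
  by (rule neg_proj_commute[OF selfadjoint_shift S]) (simp add: clinear_diff[OF S] clinear_scaleR[OF S] comm)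

lemma spectral_proj_commute_self: "E s (A x) = A (E s x)"
  by (rule spectral_proj_commute[OF selfadjoint_bounded_clinear[OF A]]) simp

lemma spectral_proj_commute_spectral_proj: "E s (E u x) = E u (E s x)"
  by (rule spectral_proj_commute[OF bounded_clinear_spectral_proj]) (simp add: spectral_proj_commute_self)

lemma spectral_proj_form_le: "E s y = y \<Longrightarrow> Re (cinner (A y) y) \<le> s * (norm y)\<^sup>2"
  using neg_proj_form_nonpos[OF selfadjoint_shift, of s y] unfolding spectral_proj_def
  by (simp add: cinner_diff_left cinner_scaleR_left power2_norm_eq_cinner)

lemma spectral_proj_form_ge: "E s y = 0 \<Longrightarrow> s * (norm y)\<^sup>2 \<le> Re (cinner (A y) y)"
  using neg_proj_kernel_form_nonneg[OF selfadjoint_shift, of s y] unfolding spectral_proj_def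
  by (simp add: cinner_diff_left cinner_scaleR_left power2_norm_eq_cinner)

lemma spectral_proj_maximal:
  assumes "csubspace S" "\<And>x. x \<in> S \<Longrightarrow> E s x \<in> S"
    and "\<And>y. y \<in> S \<Longrightarrow> Re (cinner (A y) y) \<le> s * (norm y)\<^sup>2" and "y \<in> S"
  shows "E s y = y"
  unfolding spectral_proj_def
  by (rule neg_proj_maximal[OF selfadjoint_shift])
    (use assms in \<open>auto simp: spectral_proj_def cinner_diff_left cinner_scaleR_left power2_norm_eq_cinner\<close>)

lemma spectral_proj_range_mono: "s \<le> u \<Longrightarrow> range (E s) \<subseteq> range (E u)"
proof
  fix y assume su: "s \<le> u" and "y \<in> range (E s)"
  have fixed: "x \<in> range (E s) \<longleftrightarrow> E s x = x" for x
    by (rule orth_proj_range_iff[OF orth_proj_spectral_proj])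
  have "E u y = y"
  proof (rule spectral_proj_maximal[OF csubspace_range_orth_proj[OF orth_proj_spectral_proj]])
    show "E u x \<in> range (E s)" if "x \<in> range (E s)" for x
      using that spectral_proj_commute_spectral_proj[of s u x] by (simp add: fixed)
    show "Re (cinner (A z) z) \<le> u * (norm z)\<^sup>2" if "z \<in> range (E s)" for z
      using spectral_proj_form_le[of s z] that su mult_right_mono[OF su, of "(norm z)\<^sup>2"]
      by (simp add: fixed)
  qed fact
  then show "y \<in> range (E u)" by (simp add: orth_proj_range_iff[OF orth_proj_spectral_proj])
qed

lemma spectral_proj_mono_commute:
  assumes "s \<le> u"
  shows "E u (E s x) = E s x" "E s (E u x) = E s x"
  using orth_proj_le_commute[OF orth_proj_spectral_proj orth_proj_spectral_proj
      spectral_proj_range_mono[OF assms]] by auto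

lemma spectral_proj_below:
  assumes K: "\<And>x. norm (A x) \<le> norm x * K" and s: "s < - K"
  shows "E s x = 0"
proof -
  define y where "y = E s x"
  have "Re (cinner (A y) y) \<le> s * (norm y)\<^sup>2"
    by (rule spectral_proj_form_le) (simp add: y_def spectral_proj_idem)
  moreover have "- K * (norm y)\<^sup>2 \<le> Re (cinner (A y) y)"
    using abs_Re_cinner_le_bound[OF K, of y] by linarith
  ultimately have "(- K - s) * (norm y)\<^sup>2 \<le> 0" by (simp add: algebra_simps)
  then show ?thesis using s by (simp add: y_def[symmetric] mult_le_0_iff)
qed

lemma spectral_proj_above:
  assumes K: "\<And>x. norm (A x) \<le> norm x * K" and s: "K \<le> s"
  shows "E s x = x"
proof (rule spectral_proj_maximal[OF csubspace_UNIV])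
  show "Re (cinner (A z) z) \<le> s * (norm z)\<^sup>2" for z
    using abs_Re_cinner_le_bound[OF K, of z] mult_right_mono[OF s, of "(norm z)\<^sup>2"] by simp
qed auto

lemma spectral_proj_pythagoras:
  assumes "s \<le> u"
  shows "(norm (E u x - E s x))\<^sup>2 = (norm (E u x))\<^sup>2 - (norm (E s x))\<^sup>2"
proof -
  have "cinner (E s x) (E u x - E s x) = cinner x (E s (E u x - E s x))"
    by (rule orth_proj_symmetric[OF orth_proj_spectral_proj])
  also have "\<dots> = 0"
    by (simp add: clinear_diff[OF bounded_clinear_spectral_proj] spectral_proj_mono_commute[OF assms]
        spectral_proj_idem)
  finally show ?thesis using norm_add_square[of "E s x" "E u x - E s x"] by simp
qed

lemma spectral_proj_fixed_if_fixed_above: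
  assumes y: "\<And>u. u > s \<Longrightarrow> E u y = y"
  shows "E s y = y"
proof (rule spectral_proj_maximal[of "{y. \<forall>u>s. E u y = y}"])
  show "csubspace {y. \<forall>u>s. E u y = y}"
    using clinear_add[OF bounded_clinear_spectral_proj]
      clinear_scaleC[OF bounded_clinear_spectral_proj]
      clinear_zero[OF bounded_clinear_spectral_proj] by (simp add: csubspace_def)
  show "E s x \<in> {y. \<forall>u>s. E u y = y}" if "x \<in> {y. \<forall>u>s. E u y = y}" for x
  proof (intro CollectI allI impI)
    fix u assume "s < u"
    then have "E u x = x" using that by simp
    then show "E u (E s x) = E s x"
      using spectral_proj_commute_spectral_proj[of u s x] by simp
  qed
  show "Re (cinner (A z) z) \<le> s * (norm z)\<^sup>2" if "z \<in> {y. \<forall>u>s. E u y = y}" for z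
  proof (rule le_mult_right_if_above)
    fix u assume "s < u"
    then have "E u z = z" using that by simp
    then show "Re (cinner (A z) z) \<le> u * (norm z)\<^sup>2" by (rule spectral_proj_form_le)
  qed
qed (use y in simp)

lemma norm_spectral_proj_mono: "s \<le> u \<Longrightarrow> norm (E s x) \<le> norm (E u x)"
  using spectral_proj_pythagoras[of s u x] zero_le_power2[of "norm (E u x - E s x)"]
  by (simp add: power_mono_iff[symmetric, of _ 2])

lemma tendsto_spectral_proj_right_seq: "(\<lambda>n. E (s + inverse (real (Suc n))) x) \<longlonglongrightarrow> E s x"
proof -
  define us where "us n = s + inverse (real (Suc n))" for n
  have us_gt: "s < us n" for n unfolding us_def by simp
  have us_mono: "us m \<le> us n" if "n \<le> m" for n m unfolding us_def using that by (simp add: field_simps)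
  define g where "g n = (norm (E (us n) x))\<^sup>2" for n
  have sq: "(norm (E (us m) x - E (us n) x))\<^sup>2 = g n - g m" if "n \<le> m" for n m
    using spectral_proj_pythagoras[OF us_mono[OF that], of x] by (simp add: g_def norm_minus_commute)
  have "decseq g"
    unfolding decseq_def g_def using us_mono norm_spectral_proj_mono by (simp add: power_mono)
  then have "convergent g"
    using decseq_convergent[of g 0] by (auto simp: g_def convergent_def)
  then have "Cauchy (\<lambda>n. E (us n) x)"
    by (rule Cauchy_if_square_dist_le) (simp add: sq)
  then obtain z where z: "(\<lambda>n. E (us n) x) \<longlonglongrightarrow> z"
    using Cauchy_convergent_iff convergent_def by blast
  have z_fixed: "E (us m) z = z" for m
  proof (rule LIMSEQ_unique)
    show "(\<lambda>n. E (us m) (E (us n) x)) \<longlonglongrightarrow> E (us m) z"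
      by (rule tendsto_clinear[OF bounded_clinear_spectral_proj z])
    have "\<forall>\<^sub>F n in sequentially. E (us n) x = E (us m) (E (us n) x)"
      unfolding eventually_sequentially using spectral_proj_mono_commute(1)[OF us_mono] by metis
    then show "(\<lambda>n. E (us m) (E (us n) x)) \<longlonglongrightarrow> z" by (rule Lim_transform_eventually[OF z])
  qed
  have "E u z = z" if su: "s < u" for u
  proof -
    obtain m where "inverse (real (Suc m)) < u - s"
      using reals_Archimedean[of "u - s"] su by auto
    then have "us m \<le> u" unfolding us_def by simp
    then show ?thesis using spectral_proj_mono_commute(1)[of "us m" u z] z_fixed by simp
  qed
  then have "E s z = z" by (rule spectral_proj_fixed_if_fixed_above)
  moreover have "(\<lambda>n. E s (E (us n) x)) \<longlonglongrightarrow> E s z"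
    by (rule tendsto_clinear[OF bounded_clinear_spectral_proj z])
  then have "E s z = E s x"
    using spectral_proj_mono_commute(2)[OF less_imp_le[OF us_gt]] by (simp add: LIMSEQ_const_iff)
  ultimately show ?thesis using z by (simp add: us_def)
qed

lemma spectral_proj_right_continuous: "((\<lambda>u. E u x) \<longlongrightarrow> E s x) (at_right s)"
  unfolding tendsto_iff
proof (intro allI impI)
  fix e :: real assume "0 < e"
  obtain N where "\<forall>n\<ge>N. norm (E (s + inverse (real (Suc n))) x - E s x) < e"
    using LIMSEQ_D[OF tendsto_spectral_proj_right_seq \<open>0 < e\<close>] by blast
  then have N: "dist (E (s + inverse (real (Suc N))) x) (E s x) < e" by (simp add: dist_norm)
  show "\<forall>\<^sub>F u in at_right s. dist (E u x) (E s x) < e"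
    unfolding eventually_at_right_field
  proof (intro exI conjI allI impI)
    show "s < s + inverse (real (Suc N))" by simp
    fix u assume u: "s < u" "u < s + inverse (real (Suc N))"
    \<comment> \<open>\<open>\<parallel>E\<^sub>u x - E\<^sub>s x\<parallel>\<^sup>2 = \<parallel>E\<^sub>u x\<parallel>\<^sup>2 - \<parallel>E\<^sub>s x\<parallel>\<^sup>2\<close> is monotone in \<open>u\<close>\<close>
    have "(norm (E u x - E s x))\<^sup>2 \<le> (norm (E (s + inverse (real (Suc N))) x - E s x))\<^sup>2"
      using spectral_proj_pythagoras[of s u x] spectral_proj_pythagoras[of s _ x]
        norm_spectral_proj_mono[of u "s + inverse (real (Suc N))" x] u
      by (simp add: power_mono)
    then have "norm (E u x - E s x) \<le> norm (E (s + inverse (real (Suc N))) x - E s x)"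
      by (simp add: power2_le_iff_abs_le)
    then show "dist (E u x) (E s x) < e" using N by (simp add: dist_norm)
  qed
qed

lemma spectral_increment_range:
  assumes "a \<le> b"
  shows "E b (E b z - E a z) = E b z - E a z" "E a (E b z - E a z) = 0"
  using spectral_proj_mono_commute[OF assms]
  by (simp_all add: clinear_diff[OF bounded_clinear_spectral_proj] spectral_proj_idem)

lemma spectral_increments_orthogonal:
  assumes "a \<le> b" "b \<le> c" "c \<le> d"
  shows "cinner (E b z - E a z) (E d w - E c w) = 0"
proof -
  have "E c (E b (E b z - E a z)) = E b z - E a z"
    by (subst spectral_proj_mono_commute(1)[OF assms(2)]) (rule spectral_increment_range(1)[OF assms(1)])
  then have "E b z - E a z = E c (E b (E b z - E a z))" ..
  also have "cinner \<dots> (E d w - E c w) = cinner (E b (E b z - E a z)) (E c (E d w - E c w))"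
    by (rule orth_proj_symmetric[OF orth_proj_spectral_proj])
  also have "\<dots> = 0" by (simp add: spectral_increment_range(2)[OF assms(3)])
  finally show ?thesis .
qed

lemma spectral_interval_estimate:
  assumes t: "a \<le> t" "t \<le> b" and y: "E b y = y" "E a y = 0"
  shows "norm (A y - scaleR t y) \<le> 3 * (b - a) * norm y"
proof -
  \<comment> \<open>on the range of \<open>D = E\<^sub>b - E\<^sub>a\<close> the form of \<open>A - t\<close> is bounded by \<open>b - a\<close>\<close>
  have ab: "a \<le> b" using t by simp
  define D where "D z = E b z - E a z" for z
  have D_sa: "selfadjoint D"
    unfolding D_def by (intro selfadjoint_diff orth_proj_selfadjoint orth_proj_spectral_proj A)
  have D_comm: "D (A z) = A (D z)" for z
    by (simp add: D_def spectral_proj_commute_self clinear_diff[OF selfadjoint_bounded_clinear[OF A]])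
  have D_range: "E b (D z) = D z" "E a (D z) = 0" for z
    unfolding D_def by (rule spectral_increment_range[OF ab])+
  then have D_proj: "orth_proj D"
    unfolding orth_proj_def using D_sa by (simp add: D_def)
  define G where "G z = A (D z) - scaleR t (D z)" for z
  have G_sa: "selfadjoint G"
    unfolding G_def
    by (rule selfadjoint_diff[OF selfadjoint_compose_commuting[OF A D_sa] selfadjoint_scaleR[OF D_sa]])
      (simp add: D_comm)
  have "\<bar>Re (cinner (G z) z)\<bar> \<le> (b - a) * (norm z)\<^sup>2" for z
  proof -
    define w where "w = D z"
    have Dw: "D w = w" unfolding w_def by (rule orth_proj_idem[OF D_proj])
    have "G z = D (A w - scaleR t w)"
      by (simp add: G_def w_def D_comm Dw[unfolded w_def] clinear_diff[OF selfadjoint_bounded_clinear[OF D_sa]]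
          clinear_scaleR[OF selfadjoint_bounded_clinear[OF D_sa]])
    then have "cinner (G z) z = cinner (A w - scaleR t w) w"
      using selfadjoint_symmetric[OF D_sa, of "A w - scaleR t w" z] by (simp add: w_def)
    then have "Re (cinner (G z) z) = Re (cinner (A w) w) - t * (norm w)\<^sup>2"
      by (simp add: cinner_diff_left cinner_scaleR_left power2_norm_eq_cinner)
    moreover have "Re (cinner (A w) w) \<le> b * (norm w)\<^sup>2" "a * (norm w)\<^sup>2 \<le> Re (cinner (A w) w)"
      using spectral_proj_form_le spectral_proj_form_ge D_range by (simp_all add: w_def)
    moreover have "(b - t) * (norm w)\<^sup>2 \<le> (b - a) * (norm w)\<^sup>2" "(t - a) * (norm w)\<^sup>2 \<le> (b - a) * (norm w)\<^sup>2"
      using t by (simp_all add: mult_right_mono)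
    ultimately have "\<bar>Re (cinner (G z) z)\<bar> \<le> (b - a) * (norm w)\<^sup>2"
      by (simp add: abs_le_iff algebra_simps)
    also have "\<dots> \<le> (b - a) * (norm z)\<^sup>2"
      using norm_orth_proj_le[OF D_proj, of z] ab by (intro mult_left_mono power_mono) (auto simp: w_def)
    finally show ?thesis .
  qed
  then have "norm (G y) \<le> 3 * (b - a) * norm y"
    using selfadjoint_norm_le[OF G_sa, of "b - a" y] ab by simp
  moreover have "D y = y" using y by (simp add: D_def)
  ultimately show ?thesis by (simp add: G_def)
qed

lemma spectral_partition_increments_orthogonal:
  fixes l :: "nat \<Rightarrow> real"
  assumes l_step: "\<And>k. k \<in> {1..n} \<Longrightarrow> l (k - 1) \<le> l k"
    and "j \<in> {1..n}" "k \<in> {1..n}" "j \<noteq> k"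
  shows "cinner (E (l j) z - E (l (j - 1)) z) (E (l k) w - E (l (k - 1)) w) = 0"
proof -
  have l_mono: "l i \<le> l i'" if "i \<le> i'" "i' \<le> n" for i i'
  proof (rule lift_Suc_mono_le_ivl[of "{..<n}"])
    show "l k \<le> l (Suc k)" if "k \<in> {..<n}" for k
      using l_step[of "Suc k"] that by simp
  qed (use that in auto)
  show ?thesis
  proof (cases "j < k")
    case True
    then show ?thesis
      using assms by (intro spectral_increments_orthogonal l_step l_mono) auto
  next
    case False
    then have "cinner (E (l k) w - E (l (k - 1)) w) (E (l j) z - E (l (j - 1)) z) = 0"
      using assms by (intro spectral_increments_orthogonal l_step l_mono) auto
    then show ?thesis by (metis cinner_commute complex_cnj_zero)
  qed
qed

lemma spectral_riemann_sum_estimate: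
  fixes l t :: "nat \<Rightarrow> real"
  assumes K: "\<And>x. norm (A x) \<le> norm x * K" and l0: "l 0 < - K" and ln: "K \<le> l n"
    and tag: "\<And>k. k \<in> {1..n} \<Longrightarrow> l (k - 1) \<le> t k \<and> t k \<le> l k"
    and mesh: "\<And>k. k \<in> {1..n} \<Longrightarrow> l k - l (k - 1) \<le> \<delta>" and "0 \<le> \<delta>"
  shows "norm (A x - (\<Sum>k\<in>{1..n}. scaleR (t k) (E (l k) x - E (l (k - 1)) x))) \<le> 3 * \<delta> * norm x"
proof -
  have l_step: "l (k - 1) \<le> l k" if "k \<in> {1..n}" for k using tag[OF that] by linarith
  note inc_orth = spectral_partition_increments_orthogonal[of n l, OF l_step]
  define D where "D k = E (l k) x - E (l (k - 1)) x" for k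
  have D_range: "E (l k) (D k) = D k" "E (l (k - 1)) (D k) = 0" if "k \<in> {1..n}" for k
    unfolding D_def by (rule spectral_increment_range[OF l_step[OF that]])+
  have "E (l n) x = x" by (rule spectral_proj_above[OF K ln])
  moreover have "E (l 0) x = 0" by (rule spectral_proj_below[OF K l0])
  ultimately have sum_D: "(\<Sum>k\<in>{1..n}. D k) = x"
    unfolding D_def using sum_atLeast1_telescope[of "\<lambda>k. E (l k) x" n] by simp
  define v where "v k = A (D k) - scaleR (t k) (D k)" for k
  have "A x - (\<Sum>k\<in>{1..n}. scaleR (t k) (D k)) = (\<Sum>k\<in>{1..n}. v k)"
    using clinear_sum[OF selfadjoint_bounded_clinear[OF A], of D "{1..n}"] sum_D
    by (simp add: v_def sum_subtractf)
  moreover have "(norm (\<Sum>k\<in>{1..n}. v k))\<^sup>2 \<le> (3 * \<delta> * norm x)\<^sup>2"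
  proof -
    \<comment> \<open>each \<open>v\<^sub>k\<close> is its own \<open>k\<close>-th spectral increment, so the \<open>v\<^sub>k\<close> are orthogonal\<close>
    have "v k = E (l k) (v k) - E (l (k - 1)) (v k)" if "k \<in> {1..n}" for k
      using D_range[OF that]
      by (simp add: v_def clinear_diff[OF bounded_clinear_spectral_proj]
          clinear_scaleR[OF bounded_clinear_spectral_proj] spectral_proj_commute_self
          clinear_zero[OF selfadjoint_bounded_clinear[OF A]])
    then have "(norm (\<Sum>k\<in>{1..n}. v k))\<^sup>2 = (\<Sum>k\<in>{1..n}. (norm (v k))\<^sup>2)"
      using inc_orth by (intro pythagoras_sum) (simp_all, metis)
    also have "\<dots> \<le> (\<Sum>k\<in>{1..n}. (3 * \<delta>)\<^sup>2 * (norm (D k))\<^sup>2)"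
    proof (rule sum_mono)
      fix k assume k: "k \<in> {1..n}"
      have "norm (v k) \<le> 3 * (l k - l (k - 1)) * norm (D k)"
        unfolding v_def using tag[OF k] D_range[OF k] by (intro spectral_interval_estimate) auto
      also have "\<dots> \<le> 3 * \<delta> * norm (D k)"
        using mesh[OF k] by (intro mult_right_mono) auto
      finally show "(norm (v k))\<^sup>2 \<le> (3 * \<delta>)\<^sup>2 * (norm (D k))\<^sup>2"
        by (metis norm_ge_zero power_mono power_mult_distrib)
    qed
    also have "\<dots> = (3 * \<delta>)\<^sup>2 * (norm x)\<^sup>2"
      using pythagoras_sum[of "{1..n}" D] inc_orth sum_D by (simp add: D_def sum_distrib_left)
    finally show ?thesis by (simp add: power_mult_distrib)
  qed
  then have "norm (\<Sum>k\<in>{1..n}. v k) \<le> 3 * \<delta> * norm x"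
    using \<open>0 \<le> \<delta>\<close> by (simp add: power2_le_iff_abs_le)
  ultimately show ?thesis by (simp add: D_def)
qed

end

lemma is_spectral_family_spectral_proj:
  assumes A: "selfadjoint A"
  shows "is_spectral_family A (spectral_proj A)"
proof -
  obtain K where K: "K > 0" "\<And>x. norm (A x) \<le> norm x * K"
    using bounded_clinear_pos_bound[OF selfadjoint_bounded_clinear[OF A]] by blast
  have riemann: "\<exists>\<delta>>0. \<forall>(n::nat) (l::nat \<Rightarrow> real) (t::nat \<Rightarrow> real).
          l 0 < - K \<and> K \<le> l n \<and>
          (\<forall>k\<in>{1..n}. l (k - 1) < l k \<and> l k - l (k - 1) < \<delta> \<and> l (k - 1) \<le> t k \<and> t k \<le> l k) \<longrightarrow>
          (\<forall>x. norm (A x - (\<Sum>k\<in>{1..n}. scaleR (t k)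
              (spectral_proj A (l k) x - spectral_proj A (l (k - 1)) x))) \<le> \<epsilon> * norm x)"
    if "0 < \<epsilon>" for \<epsilon>
    using spectral_riemann_sum_estimate[OF A K(2), of _ _ _ "\<epsilon> / 3"] that
    by (intro exI[of _ "\<epsilon> / 3"]) (auto simp: less_imp_le)
  have "bounded_clinear (spectral_proj A s) \<and> spectral_proj A s \<circ> spectral_proj A s = spectral_proj A s
      \<and> adj (spectral_proj A s) = spectral_proj A s" for s
    using orth_proj_spectral_proj[OF A] orth_proj_iff_projection by blast
  moreover have "proj_le (spectral_proj A s) (spectral_proj A u)" if "s \<le> u" for s u
    unfolding proj_le_def by (rule spectral_proj_range_mono[OF A that])
  moreover have "((\<lambda>u. spectral_proj A u x) \<longlongrightarrow> spectral_proj A s x) (at_right s)" for s x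
    by (rule spectral_proj_right_continuous[OF A])
  moreover have "spectral_proj A s = (\<lambda>x. 0)" if "s < - K" for s
    using spectral_proj_below[OF A K(2) that] by (simp add: fun_eq_iff)
  moreover have "spectral_proj A s = id" if "K \<le> s" for s
    using spectral_proj_above[OF A K(2) that] by (simp add: fun_eq_iff)
  moreover have "- K < K" using K by simp
  ultimately show ?thesis
    unfolding is_spectral_family_def using riemann by blast
qed

section \<open>Uniqueness of the spectral family\<close>

context
  fixes A :: "'a::chilbert \<Rightarrow> 'a" and F :: "real \<Rightarrow> 'a \<Rightarrow> 'a"
  assumes A: "selfadjoint A" and F: "is_spectral_family A F"
begin

lemma spectral_family_orth_proj: "orth_proj (F s)"
  using F[unfolded is_spectral_family_def, THEN conjunct1] orth_proj_iff_projection by blast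

lemma spectral_family_mono_commute:
  assumes "s \<le> u"
  shows "F u (F s x) = F s x" "F s (F u x) = F s x"
proof -
  have "range (F s) \<subseteq> range (F u)"
    using F[unfolded is_spectral_family_def, THEN conjunct2, THEN conjunct1] assms
    unfolding proj_le_def by blast
  then show "F u (F s x) = F s x" "F s (F u x) = F s x"
    using orth_proj_le_commute[OF spectral_family_orth_proj spectral_family_orth_proj] by blast+
qed

lemma spectral_family_right_continuous: "((\<lambda>u. F u x) \<longlongrightarrow> F s x) (at_right s)"
  using F[unfolded is_spectral_family_def, THEN conjunct2, THEN conjunct2, THEN conjunct1] by blast

lemma spectral_family_partition:
  assumes "0 < \<epsilon>"
  obtains n :: nat and l :: "nat \<Rightarrow> real" where "F (l 0) = (\<lambda>x. 0)" "F (l n) = id"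
    "\<And>k. k \<in> {1..n} \<Longrightarrow> l (k - 1) < l k \<and> l k - l (k - 1) < \<epsilon>"
    "\<And>t x. (\<And>k. k \<in> {1..n} \<Longrightarrow> l (k - 1) \<le> t k \<and> t k \<le> l k) \<Longrightarrow>
       norm (A x - (\<Sum>k\<in>{1..n}. scaleR (t k) (F (l k) x - F (l (k - 1)) x))) \<le> \<epsilon> * norm x"
proof -
  obtain a b where ab: "a < b" "\<forall>s<a. F s = (\<lambda>x. 0)" "\<forall>s\<ge>b. F s = id"
    and "\<forall>\<epsilon>>0. \<exists>\<delta>>0. \<forall>(n::nat) (l::nat \<Rightarrow> real) (t::nat \<Rightarrow> real).
          l 0 < a \<and> b \<le> l n \<and>
          (\<forall>k\<in>{1..n}. l (k - 1) < l k \<and> l k - l (k - 1) < \<delta> \<and> l (k - 1) \<le> t k \<and> t k \<le> l k) \<longrightarrow>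
          (\<forall>x. norm (A x - (\<Sum>k\<in>{1..n}. scaleR (t k) (F (l k) x - F (l (k - 1)) x))) \<le> \<epsilon> * norm x)"
    using F[unfolded is_spectral_family_def, THEN conjunct2, THEN conjunct2, THEN conjunct2] by blast
  then obtain \<delta> where "\<delta> > 0"
    and riemann: "\<forall>(n::nat) (l::nat \<Rightarrow> real) (t::nat \<Rightarrow> real).
          l 0 < a \<and> b \<le> l n \<and>
          (\<forall>k\<in>{1..n}. l (k - 1) < l k \<and> l k - l (k - 1) < \<delta> \<and> l (k - 1) \<le> t k \<and> t k \<le> l k) \<longrightarrow>
          (\<forall>x. norm (A x - (\<Sum>k\<in>{1..n}. scaleR (t k) (F (l k) x - F (l (k - 1)) x))) \<le> \<epsilon> * norm x)"
    using \<open>0 < \<epsilon>\<close> by blast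
  define h where "h = min \<delta> \<epsilon> / 2"
  have h: "0 < h" "h < \<delta>" "h < \<epsilon>" unfolding h_def using \<open>\<delta> > 0\<close> \<open>0 < \<epsilon>\<close> by auto
  obtain n :: nat where n: "b - a + 1 < real n * h" using ex_less_of_nat_mult[OF h(1)] by blast
  define l where "l k = a - 1 + real k * h" for k :: nat
  have step: "l k - l (k - 1) = h" if "k \<in> {1..n}" for k
    unfolding l_def using that by (auto simp: algebra_simps)
  have ends: "l 0 < a" "b \<le> l n" using n by (simp_all add: l_def)
  show thesis
  proof (rule that)
    show "F (l 0) = (\<lambda>x. 0)" using ab(2) ends(1) by blast
    show "F (l n) = id" using ab(3) ends(2) by blast
    show "l (k - 1) < l k \<and> l k - l (k - 1) < \<epsilon>" if "k \<in> {1..n}" for k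
      using step[OF that] h by simp
    show "norm (A x - (\<Sum>k\<in>{1..n}. scaleR (t k) (F (l k) x - F (l (k - 1)) x))) \<le> \<epsilon> * norm x"
      if "\<And>k. k \<in> {1..n} \<Longrightarrow> l (k - 1) \<le> t k \<and> t k \<le> l k" for t x
    proof -
      have "\<forall>k\<in>{1..n}. l (k - 1) < l k \<and> l k - l (k - 1) < \<delta> \<and> l (k - 1) \<le> t k \<and> t k \<le> l k"
      proof
        fix k assume k: "k \<in> {1..n}"
        show "l (k - 1) < l k \<and> l k - l (k - 1) < \<delta> \<and> l (k - 1) \<le> t k \<and> t k \<le> l k"
          using that[OF k] step[OF k] h by simp
      qed
      with ends show ?thesis by (intro riemann[rule_format]) simp
    qed
  qed
qed

lemma spectral_family_form_approx:
  assumes "0 < \<epsilon>"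
  obtains n :: nat and l w :: "nat \<Rightarrow> real"
  where "\<And>k. k \<in> {1..n} \<Longrightarrow> l (k - 1) < l k \<and> l k - l (k - 1) < \<epsilon>"
    and "\<And>k. w k = (norm (F (l k) y))\<^sup>2 - (norm (F (l (k - 1)) y))\<^sup>2"
    and "\<And>k. k \<in> {1..n} \<Longrightarrow> 0 \<le> w k" and "(\<Sum>k\<in>{1..n}. w k) = (norm y)\<^sup>2"
    and "\<And>t. (\<And>k. k \<in> {1..n} \<Longrightarrow> l (k - 1) \<le> t k \<and> t k \<le> l k) \<Longrightarrow>
       \<bar>Re (cinner (A y) y) - (\<Sum>k\<in>{1..n}. t k * w k)\<bar> \<le> \<epsilon> * (norm y)\<^sup>2"
proof (rule spectral_family_partition[OF assms])
  \<comment> \<open>the form of a Riemann sum is a weighted sum of the tags, with weights summing to \<open>\<parallel>y\<parallel>\<^sup>2\<close>\<close>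
  fix n :: nat and l :: "nat \<Rightarrow> real"
  assume l: "F (l 0) = (\<lambda>x. 0)" "F (l n) = id"
    "\<And>k. k \<in> {1..n} \<Longrightarrow> l (k - 1) < l k \<and> l k - l (k - 1) < \<epsilon>"
    and riemann: "\<And>t x. (\<And>k. k \<in> {1..n} \<Longrightarrow> l (k - 1) \<le> t k \<and> t k \<le> l k) \<Longrightarrow>
       norm (A x - (\<Sum>k\<in>{1..n}. scaleR (t k) (F (l k) x - F (l (k - 1)) x))) \<le> \<epsilon> * norm x"
  define w where "w k = (norm (F (l k) y))\<^sup>2 - (norm (F (l (k - 1)) y))\<^sup>2" for k
  show thesis
  proof (rule that[of n l w, OF l(3)])
    show "0 \<le> w k" if "k \<in> {1..n}" for k
      using norm_orth_proj_le[OF spectral_family_orth_proj, of "l (k - 1)" "F (l k) y"] l(3)[OF that]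
        spectral_family_mono_commute(2)[of "l (k - 1)" "l k" y]
      by (simp add: w_def power_mono)
    show "(\<Sum>k\<in>{1..n}. w k) = (norm y)\<^sup>2"
      unfolding w_def using sum_atLeast1_telescope[of "\<lambda>k. (norm (F (l k) y))\<^sup>2" n] l(1,2) by simp
    show "\<bar>Re (cinner (A y) y) - (\<Sum>k\<in>{1..n}. t k * w k)\<bar> \<le> \<epsilon> * (norm y)\<^sup>2"
      if "\<And>k. k \<in> {1..n} \<Longrightarrow> l (k - 1) \<le> t k \<and> t k \<le> l k" for t
    proof -
      define S where "S = (\<Sum>k\<in>{1..n}. scaleR (t k) (F (l k) y - F (l (k - 1)) y))"
      have "Re (cinner S y) = (\<Sum>k\<in>{1..n}. t k * w k)"
        by (simp add: S_def w_def cinner_sum_left cinner_scaleR_left cinner_diff_left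
            cinner_orth_proj_self[OF spectral_family_orth_proj])
      moreover have "\<bar>Re (cinner (A y - S) y)\<bar> \<le> norm (A y - S) * norm y"
        using abs_Re_le_cmod[of "cinner (A y - S) y"] cinner_Cauchy_Schwarz[of "A y - S" y] by linarith
      moreover have "norm (A y - S) * norm y \<le> \<epsilon> * (norm y)\<^sup>2"
        using mult_right_mono[OF riemann[OF that, of y] norm_ge_zero[of y]]
        by (simp add: S_def power2_eq_square mult.assoc)
      ultimately show ?thesis by (simp add: cinner_diff_left)
    qed
    show "w k = (norm (F (l k) y))\<^sup>2 - (norm (F (l (k - 1)) y))\<^sup>2" for k
      by (fact w_def)
  qed
qed

lemma spectral_family_form_le:
  assumes y: "F s y = y"
  shows "Re (cinner (A y) y) \<le> s * (norm y)\<^sup>2"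
proof (rule le_mult_right_if_above)
  fix u assume "s < u"
  define \<epsilon> where "\<epsilon> = (u - s) / 2"
  have "0 < \<epsilon>" using \<open>s < u\<close> by (simp add: \<epsilon>_def)
  then show "Re (cinner (A y) y) \<le> u * (norm y)\<^sup>2"
  proof (rule spectral_family_form_approx[where y = y])
    fix n :: nat and l w :: "nat \<Rightarrow> real"
    assume l: "\<And>k. k \<in> {1..n} \<Longrightarrow> l (k - 1) < l k \<and> l k - l (k - 1) < \<epsilon>"
      and w: "\<And>k. w k = (norm (F (l k) y))\<^sup>2 - (norm (F (l (k - 1)) y))\<^sup>2"
        "\<And>k. k \<in> {1..n} \<Longrightarrow> 0 \<le> w k" "(\<Sum>k\<in>{1..n}. w k) = (norm y)\<^sup>2"
      and approx: "\<And>t. (\<And>k. k \<in> {1..n} \<Longrightarrow> l (k - 1) \<le> t k \<and> t k \<le> l k) \<Longrightarrow>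
         \<bar>Re (cinner (A y) y) - (\<Sum>k\<in>{1..n}. t k * w k)\<bar> \<le> \<epsilon> * (norm y)\<^sup>2"
    \<comment> \<open>only cells with \<open>l\<^sub>k\<^sub>-\<^sub>1 < s\<close> carry weight, and there the right endpoint is \<open>< s + \<epsilon>\<close>\<close>
    have "(\<Sum>k\<in>{1..n}. l k * w k) \<le> (\<Sum>k\<in>{1..n}. (s + \<epsilon>) * w k)"
    proof (rule sum_mono)
      fix k assume k: "k \<in> {1..n}"
      show "l k * w k \<le> (s + \<epsilon>) * w k"
      proof (cases "s \<le> l (k - 1)")
        case True
        then have "w k = 0"
          using spectral_family_mono_commute(1)[OF True, of y] spectral_family_mono_commute(1)[of s "l k" y] l[OF k]
          by (simp add: w y)
        then show ?thesis by simp
      qed (use l[OF k] w(2)[OF k] in \<open>auto intro: mult_right_mono\<close>)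
    qed
    moreover have "\<bar>Re (cinner (A y) y) - (\<Sum>k\<in>{1..n}. l k * w k)\<bar> \<le> \<epsilon> * (norm y)\<^sup>2"
      using l by (intro approx) (auto intro: less_imp_le)
    moreover have "(\<Sum>k\<in>{1..n}. (s + \<epsilon>) * w k) = (s + \<epsilon>) * (norm y)\<^sup>2"
      by (simp only: sum_distrib_left[symmetric] w(3))
    moreover have "(s + \<epsilon>) * (norm y)\<^sup>2 + \<epsilon> * (norm y)\<^sup>2 = u * (norm y)\<^sup>2"
      by (simp add: \<epsilon>_def algebra_simps)
    ultimately show "Re (cinner (A y) y) \<le> u * (norm y)\<^sup>2"
      by linarith
  qed
qed

lemma spectral_family_form_ge:
  assumes y: "F s y = 0"
  shows "s * (norm y)\<^sup>2 \<le> Re (cinner (A y) y)"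
proof (rule mult_right_le_if_below)
  fix u assume "u < s"
  define \<epsilon> where "\<epsilon> = (s - u) / 2"
  have "0 < \<epsilon>" using \<open>u < s\<close> by (simp add: \<epsilon>_def)
  then show "u * (norm y)\<^sup>2 \<le> Re (cinner (A y) y)"
  proof (rule spectral_family_form_approx[where y = y])
    fix n :: nat and l w :: "nat \<Rightarrow> real"
    assume l: "\<And>k. k \<in> {1..n} \<Longrightarrow> l (k - 1) < l k \<and> l k - l (k - 1) < \<epsilon>"
      and w: "\<And>k. w k = (norm (F (l k) y))\<^sup>2 - (norm (F (l (k - 1)) y))\<^sup>2"
        "\<And>k. k \<in> {1..n} \<Longrightarrow> 0 \<le> w k" "(\<Sum>k\<in>{1..n}. w k) = (norm y)\<^sup>2"
      and approx: "\<And>t. (\<And>k. k \<in> {1..n} \<Longrightarrow> l (k - 1) \<le> t k \<and> t k \<le> l k) \<Longrightarrow>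
         \<bar>Re (cinner (A y) y) - (\<Sum>k\<in>{1..n}. t k * w k)\<bar> \<le> \<epsilon> * (norm y)\<^sup>2"
    \<comment> \<open>only cells with \<open>l\<^sub>k > s\<close> carry weight, and there the left endpoint is \<open>> s - \<epsilon>\<close>\<close>
    have "(\<Sum>k\<in>{1..n}. (s - \<epsilon>) * w k) \<le> (\<Sum>k\<in>{1..n}. l (k - 1) * w k)"
    proof (rule sum_mono)
      fix k assume k: "k \<in> {1..n}"
      show "(s - \<epsilon>) * w k \<le> l (k - 1) * w k"
      proof (cases "l k \<le> s")
        case True
        then have "w k = 0"
          using spectral_family_mono_commute(2)[OF True, of y] spectral_family_mono_commute(2)[of "l (k - 1)" s y]
            l[OF k] clinear_zero[OF orth_proj_bounded_clinear[OF spectral_family_orth_proj]]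
          by (simp add: w y)
        then show ?thesis by simp
      qed (use l[OF k] w(2)[OF k] in \<open>auto intro: mult_right_mono\<close>)
    qed
    moreover have "\<bar>Re (cinner (A y) y) - (\<Sum>k\<in>{1..n}. l (k - 1) * w k)\<bar> \<le> \<epsilon> * (norm y)\<^sup>2"
      using l by (intro approx) (auto intro: less_imp_le)
    moreover have "(\<Sum>k\<in>{1..n}. (s - \<epsilon>) * w k) = (s - \<epsilon>) * (norm y)\<^sup>2"
      by (simp only: sum_distrib_left[symmetric] w(3))
    moreover have "(s - \<epsilon>) * (norm y)\<^sup>2 - \<epsilon> * (norm y)\<^sup>2 = u * (norm y)\<^sup>2"
      by (simp add: \<epsilon>_def algebra_simps)
    ultimately show "u * (norm y)\<^sup>2 \<le> Re (cinner (A y) y)"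
      by linarith
  qed
qed

lemma spectral_family_commute_family: "F s (F u x) = F u (F s x)"
  by (cases "s \<le> u") (simp_all add: spectral_family_mono_commute)

lemma spectral_family_commute: "F s (A x) = A (F s x)"
proof -
  have Fb: "bounded_clinear (F u)" for u
    by (rule orth_proj_bounded_clinear[OF spectral_family_orth_proj])
  have "norm (F s (A x) - A (F s x)) \<le> 0 * (2 * norm x)"
  proof (rule le_mult_right_if_above)
    fix \<epsilon> :: real assume "0 < \<epsilon>"
    then show "norm (F s (A x) - A (F s x)) \<le> \<epsilon> * (2 * norm x)"
    proof (rule spectral_family_partition)
      \<comment> \<open>a Riemann sum \<open>S\<close> of \<open>A\<close> commutes with \<open>F\<^sub>s\<close>, and \<open>A\<close> is within \<open>\<epsilon>\<close> of \<open>S\<close>\<close>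
      fix n :: nat and l :: "nat \<Rightarrow> real"
      assume l: "\<And>k. k \<in> {1..n} \<Longrightarrow> l (k - 1) < l k \<and> l k - l (k - 1) < \<epsilon>"
        and riemann: "\<And>t z. (\<And>k. k \<in> {1..n} \<Longrightarrow> l (k - 1) \<le> t k \<and> t k \<le> l k) \<Longrightarrow>
          norm (A z - (\<Sum>k\<in>{1..n}. scaleR (t k) (F (l k) z - F (l (k - 1)) z))) \<le> \<epsilon> * norm z"
      define S where "S z = (\<Sum>k\<in>{1..n}. scaleR (l k) (F (l k) z - F (l (k - 1)) z))" for z
      have approx: "norm (A z - S z) \<le> \<epsilon> * norm z" for z
        unfolding S_def by (rule riemann) (use l in \<open>auto intro: less_imp_le\<close>)
      have "F s (S x) = S (F s x)"
        by (simp add: S_def clinear_sum[OF Fb] clinear_scaleR[OF Fb] clinear_diff[OF Fb]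
            spectral_family_commute_family)
      then have "F s (A x) - A (F s x) = F s (A x - S x) + (S (F s x) - A (F s x))"
        by (simp add: clinear_diff[OF Fb])
      also have "norm \<dots> \<le> \<epsilon> * norm x + \<epsilon> * norm x"
      proof (rule norm_triangle_le[OF add_mono])
        show "norm (F s (A x - S x)) \<le> \<epsilon> * norm x"
          by (rule order_trans[OF norm_orth_proj_le[OF spectral_family_orth_proj] approx])
        show "norm (S (F s x) - A (F s x)) \<le> \<epsilon> * norm x"
          using approx[of "F s x"] norm_orth_proj_le[OF spectral_family_orth_proj, of s x] \<open>0 < \<epsilon>\<close>
          by (simp add: norm_minus_commute) (meson mult_left_mono less_imp_le order_trans)
      qed
      finally show ?thesis by simp
    qed
  qed
  then show ?thesis by simp
qed

lemma range_spectral_family_subset: "range (F s) \<subseteq> range (spectral_proj A s)"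
proof
  fix y assume "y \<in> range (F s)"
  have Fb: "bounded_clinear (F s)" by (rule orth_proj_bounded_clinear[OF spectral_family_orth_proj])
  have fixed: "z \<in> range (F s) \<longleftrightarrow> F s z = z" for z
    by (rule orth_proj_range_iff[OF spectral_family_orth_proj])
  have comm: "spectral_proj A s (F s z) = F s (spectral_proj A s z)" for z
    by (rule spectral_proj_commute[OF A Fb]) (rule spectral_family_commute)
  have "spectral_proj A s y = y"
  proof (rule spectral_proj_maximal[OF A csubspace_range_orth_proj[OF spectral_family_orth_proj]])
    show "spectral_proj A s z \<in> range (F s)" if "z \<in> range (F s)" for z
      using that comm[of z] by (simp add: fixed)
    show "Re (cinner (A z) z) \<le> s * (norm z)\<^sup>2" if "z \<in> range (F s)" for z
      using that by (simp add: fixed spectral_family_form_le)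
  qed fact
  then show "y \<in> range (spectral_proj A s)"
    by (simp add: orth_proj_range_iff[OF orth_proj_spectral_proj[OF A]])
qed

lemma range_spectral_proj_subset: "range (spectral_proj A s) \<subseteq> range (F s)"
proof
  fix y assume "y \<in> range (spectral_proj A s)"
  then have y: "spectral_proj A s y = y"
    by (simp add: orth_proj_range_iff[OF orth_proj_spectral_proj[OF A]])
  have fixed_above: "F u y = y" if "s < u" for u
  proof -
    \<comment> \<open>on \<open>z = y - F\<^sub>u y\<close> the form of \<open>A\<close> is both \<open>\<ge> u \<parallel>z\<parallel>\<^sup>2\<close> and \<open>\<le> s \<parallel>z\<parallel>\<^sup>2\<close>\<close>
    have Fb: "bounded_clinear (F u)" by (rule orth_proj_bounded_clinear[OF spectral_family_orth_proj])
    define z where "z = y - F u y"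
    have "F u z = 0"
      by (simp add: z_def clinear_diff[OF Fb] orth_proj_idem[OF spectral_family_orth_proj])
    then have "u * (norm z)\<^sup>2 \<le> Re (cinner (A z) z)" by (rule spectral_family_form_ge)
    moreover have "spectral_proj A s (F u y) = F u (spectral_proj A s y)"
      by (rule spectral_proj_commute[OF A Fb]) (rule spectral_family_commute)
    then have "spectral_proj A s z = z"
      using y
      by (simp add: z_def clinear_diff[OF bounded_clinear_spectral_proj[OF A]])
    then have "Re (cinner (A z) z) \<le> s * (norm z)\<^sup>2" by (rule spectral_proj_form_le[OF A])
    ultimately have "(u - s) * (norm z)\<^sup>2 \<le> 0" by (simp add: algebra_simps)
    then have "z = 0" using that by (simp add: mult_le_0_iff)
    then show ?thesis by (simp add: z_def)
  qed
  have "\<forall>\<^sub>F u in at_right s. y = F u y"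
    using eventually_at_right_less[of s] by eventually_elim (simp add: fixed_above)
  then have "((\<lambda>u. F u y) \<longlongrightarrow> y) (at_right s)"
    by (rule Lim_transform_eventually[OF tendsto_const])
  then have "F s y = y"
    using tendsto_unique[OF trivial_limit_at_right_real spectral_family_right_continuous] by simp
  then show "y \<in> range (F s)" by (simp add: orth_proj_range_iff[OF spectral_family_orth_proj])
qed

lemma spectral_family_eq_spectral_proj: "F = spectral_proj A"
proof
  fix s
  show "F s = spectral_proj A s"
    by (rule orth_proj_eqI[OF spectral_family_orth_proj orth_proj_spectral_proj[OF A]])
      (rule equalityI[OF range_spectral_family_subset range_spectral_proj_subset])
qed

end

lemma spectral_family_eq:
  assumes "selfadjoint A"
  shows "spectral_family A = spectral_proj A"
  unfolding spectral_family_def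
  using is_spectral_family_spectral_proj[OF assms] spectral_family_eq_spectral_proj[OF assms]
  by (rule the_equality)

lemma commutant_commute: "X \<in> commutant R \<Longrightarrow> Y \<in> R \<Longrightarrow> X (Y x) = Y (X x)"
  unfolding commutant_def by (auto simp: fun_eq_iff)

lemma commutant_bounded_clinear: "X \<in> commutant R \<Longrightarrow> bounded_clinear X"
  unfolding commutant_def by blast

context
  fixes R :: "('a::chilbert \<Rightarrow> 'a) set"
  assumes vN: "von_neumann_algebra R"
begin

lemma von_neumann_algebra_bounded_clinear: "T \<in> R \<Longrightarrow> bounded_clinear T"
  using vN unfolding von_neumann_algebra_def by blast

lemma mem_von_neumann_algebra_if_commutes:
  assumes "bounded_clinear G" and "\<And>X x. X \<in> commutant R \<Longrightarrow> G (X x) = X (G x)"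
  shows "G \<in> R"
proof -
  have "G \<in> commutant (commutant R)"
    unfolding commutant_def[of "commutant R"] using assms by (auto simp: fun_eq_iff)
  then show ?thesis using vN unfolding von_neumann_algebra_def by simp
qed

lemma projections_orth_proj: "P \<in> projections R \<Longrightarrow> orth_proj P"
  unfolding projections_def orth_proj_iff_projection using von_neumann_algebra_bounded_clinear by blast

lemma orth_proj_in_projections: "orth_proj P \<Longrightarrow> P \<in> R \<Longrightarrow> P \<in> projections R"
  unfolding projections_def orth_proj_iff_projection by blast

lemma id_in_projections: "id \<in> projections R"
  using vN orth_proj_iff_projection bounded_clinear_id
  unfolding projections_def von_neumann_algebra_def by (auto simp: selfadjoint_iff_adj[symmetric]
      intro: selfadjointI)

lemma projections_inf_exists:
  assumes P: "P \<in> projections R" and Q: "Q \<in> projections R"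
  shows "\<exists>G\<in>projections R. range G = range P \<inter> range Q"
proof -
  have Ph: "orth_proj P" and Qh: "orth_proj Q" using P Q by (auto intro: projections_orth_proj)
  define M where "M = range P \<inter> range Q"
  have M: "closed M" "csubspace M"
    unfolding M_def
    by (intro closed_Int closed_range_orth_proj csubspace_Int csubspace_range_orth_proj Ph Qh)+
  define G where "G = orthoproj M"
  have Gh: "orth_proj G" and rG: "range G = M"
    unfolding G_def by (rule orth_proj_orthoproj[OF M], rule range_orthoproj[OF M])
  \<comment> \<open>\<open>M\<close> is invariant under the commutant, which is closed under adjoints\<close>
  have "G \<in> R"
  proof (rule mem_von_neumann_algebra_if_commutes[OF orth_proj_bounded_clinear[OF Gh]])
    fix X x assume X: "X \<in> commutant R"
    have Xb: "bounded_clinear X" by (rule commutant_bounded_clinear[OF X])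
    have invariant: "S y \<in> M" if S: "\<And>z. S (P z) = P (S z)" "\<And>z. S (Q z) = Q (S z)" and "y \<in> M" for S y
      using \<open>y \<in> M\<close> S[of y] by (simp add: M_def orth_proj_range_iff[OF Ph] orth_proj_range_iff[OF Qh])
    have XP: "X (P z) = P (X z)" "X (Q z) = Q (X z)" for z
      using P Q commutant_commute[OF X] unfolding projections_def by auto
    have "adj X (P z) = P (adj X z)" "adj X (Q z) = Q (adj X z)" for z
      by (rule adj_commute_selfadjoint[OF Xb orth_proj_selfadjoint[OF Ph]], rule XP(1))
        (rule adj_commute_selfadjoint[OF Xb orth_proj_selfadjoint[OF Qh]], rule XP(2))
    then show "G (X x) = X (G x)"
      using invariant[of X] invariant[of "adj X"] XP rG orth_proj_range_iff[OF Gh]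
      by (intro orth_proj_commute_if_invariant[OF Gh Xb]) (metis rangeI)+
  qed
  then show ?thesis using orth_proj_in_projections[OF Gh] rG M_def by blast
qed

lemma spectral_proj_in_projections:
  assumes A: "selfadjoint A" and "A \<in> R"
  shows "spectral_proj A s \<in> projections R"
proof (rule orth_proj_in_projections[OF orth_proj_spectral_proj[OF A]])
  show "spectral_proj A s \<in> R"
  proof (rule mem_von_neumann_algebra_if_commutes[OF bounded_clinear_spectral_proj[OF A]])
    fix X x assume X: "X \<in> commutant R"
    show "spectral_proj A s (X x) = X (spectral_proj A s x)"
      by (rule spectral_proj_commute[OF A commutant_bounded_clinear[OF X]])
        (rule commutant_commute[OF X \<open>A \<in> R\<close>])
  qed
qed

end

section \<open>Quasipoints and the Stone spectrum\<close>

definition stone_basic_open :: "('a::chilbert \<Rightarrow> 'a) set \<Rightarrow> ('a \<Rightarrow> 'a) \<Rightarrow> ('a \<Rightarrow> 'a) set set" where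
  "stone_basic_open R P = {B \<in> stone_spectrum R. P \<in> B}"

text \<open>\<open>proj_disjoint R P Q\<close> says \<open>P \<and> Q = 0\<close> in the projection lattice of \<open>R\<close>.\<close>

definition proj_disjoint :: "('a::chilbert \<Rightarrow> 'a) set \<Rightarrow> ('a \<Rightarrow> 'a) \<Rightarrow> ('a \<Rightarrow> 'a) \<Rightarrow> bool" where
  "proj_disjoint R P Q \<longleftrightarrow> \<not> (\<exists>S\<in>projections R. S \<noteq> (\<lambda>x. 0) \<and> range S \<subseteq> range P \<inter> range Q)"

lemma openin_stone_basic_open:
  "P \<in> projections R \<Longrightarrow> openin (stone_topology R) (stone_basic_open R P)"
  unfolding stone_topology_def stone_basic_open_def openin_topology_generated_by_iff
  by (rule generate_topology_on.Basis) blast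

lemma topspace_stone_topology:
  "topspace (stone_topology R) = {B. quasipoint R B \<and> (\<exists>P\<in>projections R. P \<in> B)}"
  unfolding stone_topology_def stone_spectrum_def by auto

context
  fixes R :: "('a::chilbert \<Rightarrow> 'a) set" and B :: "('a \<Rightarrow> 'a) set"
  assumes B: "quasipoint R B"
begin

lemma quasipoint_maximal: "proj_filter_base R C \<Longrightarrow> B \<subseteq> C \<Longrightarrow> C = B"
  using B unfolding quasipoint_def by blast

lemma quasipoint_subset: "B \<subseteq> projections R"
  and quasipoint_nonzero: "(\<lambda>x. 0) \<notin> B"
  and quasipoint_directed: "P \<in> B \<Longrightarrow> Q \<in> B \<Longrightarrow> \<exists>S\<in>B. range S \<subseteq> range P \<inter> range Q"
  using B[unfolded quasipoint_def, THEN conjunct1] unfolding proj_filter_base_def by blast+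

lemma quasipoint_upward_closed:
  assumes P: "P \<in> B" and Q: "Q \<in> projections R" and le: "range P \<subseteq> range Q"
  shows "Q \<in> B"
proof -
  have "Q \<noteq> (\<lambda>x. 0)"
  proof
    assume Q0: "Q = (\<lambda>x. 0)"
    have "range P \<subseteq> {0}" using le by (simp add: Q0)
    then have "P x = 0" for x using rangeI[of P x] by blast
    then show False using P quasipoint_nonzero by (metis ext)
  qed
  then have zero: "(\<lambda>x. 0) \<notin> insert Q B" using quasipoint_nonzero by simp
  have sub: "insert Q B \<subseteq> projections R" using Q quasipoint_subset by simp
  have lower: "\<exists>P'\<in>B. range P' \<subseteq> range X" if "X \<in> insert Q B" for X
  proof (cases "X = Q")
    case True then show ?thesis using P le by blast
  next
    case False then show ?thesis using that by blast
  qed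
  have dir: "\<exists>S\<in>insert Q B. range S \<subseteq> range P1 \<inter> range P2"
    if P1: "P1 \<in> insert Q B" and P2: "P2 \<in> insert Q B" for P1 P2
  proof -
    obtain Q1 where Q1: "Q1 \<in> B" "range Q1 \<subseteq> range P1" using lower[OF P1] by blast
    obtain Q2 where Q2: "Q2 \<in> B" "range Q2 \<subseteq> range P2" using lower[OF P2] by blast
    obtain S where "S \<in> B" "range S \<subseteq> range Q1 \<inter> range Q2"
      using quasipoint_directed[OF Q1(1) Q2(1)] by blast
    then show ?thesis using Q1(2) Q2(2) by blast
  qed
  have "proj_filter_base R (insert Q B)"
    unfolding proj_filter_base_def using sub zero dir by blast
  then have "insert Q B = B" by (rule quasipoint_maximal) blast
  then show ?thesis by blast
qed

lemma quasipoint_id: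
  assumes "von_neumann_algebra R" and "B \<noteq> {}"
  shows "id \<in> B"
proof -
  obtain P where "P \<in> B" using \<open>B \<noteq> {}\<close> by blast
  then show ?thesis
    by (rule quasipoint_upward_closed) (simp_all add: id_in_projections[OF assms(1)])
qed

lemma quasipoint_meet_mem:
  assumes vN: "von_neumann_algebra R" and P: "P \<in> projections R"
    and meets: "\<And>Q. Q \<in> B \<Longrightarrow> \<not> proj_disjoint R Q P"
    and G: "G \<in> projections R" "Q \<in> B" "range G = range Q \<inter> range P"
  shows "G \<in> B"
proof -
  \<comment> \<open>adjoining all meets with \<open>P\<close> keeps a filter base, so by maximality they already lie in \<open>B\<close>\<close>
  define C where "C = B \<union> {G \<in> projections R. \<exists>Q\<in>B. range G = range Q \<inter> range P}"
  have meet: "\<exists>G\<in>C. range G = range Q \<inter> range P" if "Q \<in> B" for Q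
  proof -
    have "Q \<in> projections R" using that quasipoint_subset by blast
    then obtain G where "G \<in> projections R" "range G = range Q \<inter> range P"
      using projections_inf_exists[OF vN _ P] by blast
    then show ?thesis using that unfolding C_def by blast
  qed
  have below: "\<exists>Q\<in>B. range Q \<inter> range P \<subseteq> range X" if "X \<in> C" for X
    using that unfolding C_def by blast
  have "(\<lambda>x. 0) \<notin> C"
  proof
    assume "(\<lambda>x. 0) \<in> C"
    then obtain Q where "Q \<in> B" "range (\<lambda>x::'a. 0::'a) = range Q \<inter> range P"
      using quasipoint_nonzero unfolding C_def by blast
    moreover obtain S :: "'a \<Rightarrow> 'a" where "S \<noteq> (\<lambda>x. 0)" "range S \<subseteq> range Q \<inter> range P"
      using meets[OF \<open>Q \<in> B\<close>] unfolding proj_disjoint_def by blast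
    ultimately have "range S \<subseteq> {0}" by simp
    then have "S x = 0" for x using rangeI[of S x] by blast
    with \<open>S \<noteq> (\<lambda>x. 0)\<close> show False by auto
  qed
  moreover have "\<exists>S\<in>C. range S \<subseteq> range P1 \<inter> range P2" if P1: "P1 \<in> C" and P2: "P2 \<in> C" for P1 P2
  proof -
    obtain Q1 where Q1: "Q1 \<in> B" "range Q1 \<inter> range P \<subseteq> range P1" using below[OF P1] by blast
    obtain Q2 where Q2: "Q2 \<in> B" "range Q2 \<inter> range P \<subseteq> range P2" using below[OF P2] by blast
    obtain Q3 where Q3: "Q3 \<in> B" "range Q3 \<subseteq> range Q1 \<inter> range Q2"
      using quasipoint_directed[OF Q1(1) Q2(1)] by blast
    obtain G where G: "G \<in> C" "range G = range Q3 \<inter> range P" using meet[OF Q3(1)] by blast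
    have "range G \<subseteq> range P1 \<inter> range P2"
      unfolding G(2) using Q1(2) Q2(2) Q3(2) by blast
    then show ?thesis using G(1) by blast
  qed
  moreover have "C \<subseteq> projections R" using quasipoint_subset by (auto simp: C_def)
  ultimately have "proj_filter_base R C" unfolding proj_filter_base_def by blast
  then have "C = B" by (rule quasipoint_maximal) (auto simp: C_def)
  then show ?thesis using G unfolding C_def by blast
qed

lemma quasipoint_mem_if_meets:
  assumes vN: "von_neumann_algebra R" and "B \<noteq> {}" and P: "P \<in> projections R"
    and meets: "\<And>Q. Q \<in> B \<Longrightarrow> \<not> proj_disjoint R Q P"
  shows "P \<in> B"
proof (rule quasipoint_meet_mem[OF vN P meets P])
  show "id \<in> B" by (rule quasipoint_id[OF vN \<open>B \<noteq> {}\<close>])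
qed simp_all

end

context
  fixes R :: "('a::chilbert \<Rightarrow> 'a) set" and E :: "real \<Rightarrow> 'a \<Rightarrow> 'a" and a b :: real
  assumes vN: "von_neumann_algebra R" and E: "\<And>s. E s \<in> projections R"
    and E_mono: "\<And>s u. s \<le> u \<Longrightarrow> range (E s) \<subseteq> range (E u)"
    and E_below: "\<And>s. s < a \<Longrightarrow> E s = (\<lambda>x. 0)" and E_above: "\<And>s. b \<le> s \<Longrightarrow> E s = id"
begin

lemma
  assumes B: "quasipoint R B" "B \<noteq> {}"
  shows stone_inf_set_top_mem: "E b \<in> B" and bdd_below_stone_inf_set: "bdd_below {s. E s \<in> B}"
proof -
  show "E b \<in> B" using quasipoint_id[OF B(1) vN B(2)] E_above[of b] by simp
  have "a \<le> s" if "E s \<in> B" for s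
    using that E_below[of s] quasipoint_nonzero[OF B(1)] by force
  then show "bdd_below {s. E s \<in> B}" by (intro bdd_belowI[of _ a]) simp
qed

lemma openin_stone_inf_less:
  "openin (stone_topology R) {B \<in> topspace (stone_topology R). Inf {s. E s \<in> B} < r}"
proof -
  have "{B \<in> topspace (stone_topology R). Inf {s. E s \<in> B} < r} = (\<Union>s\<in>{..<r}. stone_basic_open R (E s))"
  proof (intro equalityI subsetI)
    fix B assume "B \<in> {B \<in> topspace (stone_topology R). Inf {s. E s \<in> B} < r}"
    then have B: "quasipoint R B" "B \<noteq> {}" and "Inf {s. E s \<in> B} < r"
      by (auto simp: topspace_stone_topology)
    then obtain s where "E s \<in> B" "s < r"
      using cInf_lessD[of "{s. E s \<in> B}"] stone_inf_set_top_mem[OF B] by blast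
    moreover have "B \<in> stone_basic_open R (E s)"
      using B(1) \<open>E s \<in> B\<close> by (simp add: stone_basic_open_def stone_spectrum_def)
    ultimately show "B \<in> (\<Union>s\<in>{..<r}. stone_basic_open R (E s))" by blast
  next
    fix B assume "B \<in> (\<Union>s\<in>{..<r}. stone_basic_open R (E s))"
    then obtain s where B: "quasipoint R B" and "E s \<in> B" "s < r"
      by (auto simp: stone_basic_open_def stone_spectrum_def)
    then have "B \<noteq> {}" by auto
    then have "Inf {s. E s \<in> B} \<le> s"
      using \<open>E s \<in> B\<close> by (intro cInf_lower bdd_below_stone_inf_set[OF B]) auto
    then show "B \<in> {B \<in> topspace (stone_topology R). Inf {s. E s \<in> B} < r}"
      using B \<open>E s \<in> B\<close> \<open>s < r\<close> E by (auto simp: topspace_stone_topology)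
  qed
  moreover have "openin (stone_topology R) (\<Union>s\<in>{..<r}. stone_basic_open R (E s))"
    by (intro openin_Union) (auto intro: openin_stone_basic_open E)
  ultimately show ?thesis by simp
qed

lemma stone_inf_ge_if_disjoint:
  assumes B: "quasipoint R B" and "Q \<in> B" and disj: "proj_disjoint R Q (E \<mu>)"
  shows "\<mu> \<le> Inf {s. E s \<in> B}"
proof (rule cInf_greatest)
  show "{s. E s \<in> B} \<noteq> {}" using stone_inf_set_top_mem[OF B] \<open>Q \<in> B\<close> by blast
  show "\<mu> \<le> s" if s: "s \<in> {s. E s \<in> B}" for s
  proof (rule ccontr)
    assume "\<not> \<mu> \<le> s"
    then have "range (E s) \<subseteq> range (E \<mu>)" by (intro E_mono) simp
    moreover obtain S where "S \<in> B" "range S \<subseteq> range Q \<inter> range (E s)"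
      using quasipoint_directed[OF B \<open>Q \<in> B\<close>] s by blast
    ultimately have "range S \<subseteq> range Q \<inter> range (E \<mu>)" by blast
    moreover have "S \<in> projections R" "S \<noteq> (\<lambda>x. 0)"
      using \<open>S \<in> B\<close> quasipoint_subset[OF B] quasipoint_nonzero[OF B] by auto
    ultimately show False using disj unfolding proj_disjoint_def by blast
  qed
qed

lemma disjoint_if_less_stone_inf:
  assumes B: "quasipoint R B" "B \<noteq> {}" and r: "r < Inf {s. E s \<in> B}"
  shows "\<exists>Q\<in>B. \<exists>\<mu>>r. proj_disjoint R Q (E \<mu>)"
proof -
  define \<mu> where "\<mu> = (r + Inf {s. E s \<in> B}) / 2"
  have "E \<mu> \<notin> B"
  proof
    assume "E \<mu> \<in> B"
    then have "Inf {s. E s \<in> B} \<le> \<mu>" using bdd_below_stone_inf_set[OF B] by (intro cInf_lower) auto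
    then show False using r by (simp add: \<mu>_def)
  qed
  then have "\<exists>Q\<in>B. proj_disjoint R Q (E \<mu>)"
    using quasipoint_mem_if_meets[OF B(1) vN B(2) E] by blast
  moreover have "r < \<mu>" using r by (simp add: \<mu>_def)
  ultimately show ?thesis by blast
qed

lemma openin_stone_inf_greater:
  "openin (stone_topology R) {B \<in> topspace (stone_topology R). r < Inf {s. E s \<in> B}}"
proof -
  define U where "U = {Q \<in> projections R. \<exists>\<mu>>r. proj_disjoint R Q (E \<mu>)}"
  have "{B \<in> topspace (stone_topology R). r < Inf {s. E s \<in> B}} = (\<Union>Q\<in>U. stone_basic_open R Q)"
  proof (intro equalityI subsetI)
    fix B assume "B \<in> {B \<in> topspace (stone_topology R). r < Inf {s. E s \<in> B}}"
    then have B: "quasipoint R B" "B \<noteq> {}" and "r < Inf {s. E s \<in> B}"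
      by (auto simp: topspace_stone_topology)
    then obtain Q where "Q \<in> B" "\<exists>\<mu>>r. proj_disjoint R Q (E \<mu>)"
      using disjoint_if_less_stone_inf by blast
    then have "Q \<in> U" using quasipoint_subset[OF B(1)] unfolding U_def by blast
    moreover have "B \<in> stone_basic_open R Q"
      using B(1) \<open>Q \<in> B\<close> by (simp add: stone_basic_open_def stone_spectrum_def)
    ultimately show "B \<in> (\<Union>Q\<in>U. stone_basic_open R Q)" by blast
  next
    fix B assume "B \<in> (\<Union>Q\<in>U. stone_basic_open R Q)"
    then obtain Q \<mu> where B: "quasipoint R B" and "Q \<in> B" "Q \<in> projections R" "r < \<mu>"
      and "proj_disjoint R Q (E \<mu>)"
      by (auto simp: U_def stone_basic_open_def stone_spectrum_def)
    then have "\<mu> \<le> Inf {s. E s \<in> B}" by (intro stone_inf_ge_if_disjoint)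
    then show "B \<in> {B \<in> topspace (stone_topology R). r < Inf {s. E s \<in> B}}"
      using B \<open>Q \<in> B\<close> \<open>Q \<in> projections R\<close> \<open>r < \<mu>\<close> by (auto simp: topspace_stone_topology)
  qed
  moreover have "openin (stone_topology R) (\<Union>Q\<in>U. stone_basic_open R Q)"
    by (intro openin_Union) (auto intro: openin_stone_basic_open simp: U_def)
  ultimately show ?thesis by simp
qed

lemma continuous_map_stone_inf:
  "continuous_map (stone_topology R) euclideanreal (\<lambda>B. Inf {s. E s \<in> B})"
  unfolding continuous_map_upper_lower_semicontinuous_lt
  using openin_stone_inf_less openin_stone_inf_greater by blast

end

theorem theorem2p3:
  fixes R :: "('a::chilbert \<Rightarrow> 'a) set" and A :: "'a \<Rightarrow> 'a"
  assumes "von_neumann_algebra R"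
    and "A \<in> self_adjoint_part R"
  shows "continuous_map (stone_topology R) euclideanreal (observable_function A)"
proof -
  have "A \<in> R" and "adj A = A" using assms(2) unfolding self_adjoint_part_def by auto
  then have A: "selfadjoint A"
    using selfadjoint_iff_adj von_neumann_algebra_bounded_clinear[OF assms(1)] by blast
  obtain K where K: "\<And>x. norm (A x) \<le> norm x * K"
    using bounded_clinear_pos_bound[OF selfadjoint_bounded_clinear[OF A]] by blast
  have "observable_function A = (\<lambda>B. Inf {s. spectral_proj A s \<in> B})"
    by (simp add: fun_eq_iff observable_function_def spectral_family_eq[OF A])
  moreover have "continuous_map (stone_topology R) euclideanreal (\<lambda>B. Inf {s. spectral_proj A s \<in> B})"
  proof (rule continuous_map_stone_inf[OF assms(1)])
    show "spectral_proj A s \<in> projections R" for s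
      by (rule spectral_proj_in_projections[OF assms(1) A \<open>A \<in> R\<close>])
    show "range (spectral_proj A s) \<subseteq> range (spectral_proj A u)" if "s \<le> u" for s u
      by (rule spectral_proj_range_mono[OF A that])
    show "spectral_proj A s = (\<lambda>x. 0)" if "s < - K" for s
      using spectral_proj_below[OF A K that] by (simp add: fun_eq_iff)
    show "spectral_proj A s = id" if "K \<le> s" for s
      using spectral_proj_above[OF A K that] by (simp add: fun_eq_iff)
  qed
  ultimately show ?thesis by simp
qed

end
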